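(* Let $\mathbb{R}^d_+=\{x_d>0\}$, $s\in(0,1)$, and $K_{\mathbb{R}^d_+}(x,y)=c_{d,s}\big(|x-y|^{-d-2s}+|(x'-y',x_d+y_d)|^{-d-2s}\big)$. For all sufficiently smooth $\phi,\psi$ on $\mathbb{R}^d_+$ (for which the integrals converge), $$\int_{\mathbb{R}^d_+}\phi(x)\,(-\Delta)^s_{SR}\psi(x)\,dx=\frac12\iint_{\mathbb{R}^d_+\times\mathbb{R}^d_+}(\phi(x)-\phi(y))(\psi(x)-\psi(y))K_{\mathbb{R}^d_+}(x,y)\,dx\,dy.$$ In particular $\int\phi\,(-\Delta)^s_{SR}\psi=\int\psi\,(-\Delta)^s_{SR}\phi$.
   Context: $c_{d,s}=\big(\int_{\mathbb{R}^d}\frac{1-\cos\zeta_1}{|\zeta|^{d+2s}}d\zeta\big)^{-1}$. On the half-space, $\eta(x,w)=x+w$ if $x_d+w_d\ge0$ and $\eta(x,w)=(x'+w',-x_d-w_d)$ otherwise, and $(-\Delta)^s_{SR}\psi(x)=c_{d,s}\,\mathrm{P.V.}\int_{\mathbb{R}^d}\frac{\psi(x)-\psi(\eta(x,w))}{|w|^{d+2s}}dw$. *)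

theory Defs
  imports "HOL-Analysis.Analysis"
begin

text \<open>Euclidean space R^d is modelled as real^'n with d = CARD('n); a fixed index k
  plays the role of the last coordinate x_d.\<close>

definition halfspace :: "'n::finite \<Rightarrow> (real^'n) set" where
  "halfspace k = {x. x $ k > 0}"

definition reflect :: "'n::finite \<Rightarrow> real^'n \<Rightarrow> real^'n" where
  "reflect k v = (\<chi> i. if i = k then - (v $ i) else v $ i)"

definition eta :: "'n::finite \<Rightarrow> real^'n \<Rightarrow> real^'n \<Rightarrow> real^'n" where
  "eta k x w = (if x $ k + w $ k \<ge> 0 then x + w else reflect k (x + w))"

text \<open>c_{d,s}; the coordinate used in 1 - cos(zeta_1) is given by j (value independent of j).\<close>
definition c_ds :: "real \<Rightarrow> 'n::finite \<Rightarrow> real" where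
  "c_ds s j = 1 / (LINT \<zeta>|lborel. (1 - cos (\<zeta> $ j)) / norm (\<zeta>::real^'n) powr (real CARD('n) + 2 * s))"

definition frac_lap_SR :: "real \<Rightarrow> 'n::finite \<Rightarrow> (real^'n \<Rightarrow> real) \<Rightarrow> real^'n \<Rightarrow> real" where
  "frac_lap_SR s k \<psi> x = c_ds s k *
     Lim (at_right 0) (\<lambda>\<epsilon>::real. LINT w:{w. \<epsilon> < norm w}|lborel.
          (\<psi> x - \<psi> (eta k x w)) / norm (w::real^'n) powr (real CARD('n) + 2 * s))"

definition kernel_half :: "real \<Rightarrow> 'n::finite \<Rightarrow> real^'n \<Rightarrow> real^'n \<Rightarrow> real" where
  "kernel_half s k x y = c_ds s k *
     (norm (x - y) powr (- (real CARD('n) + 2 * s)) + norm (x - reflect k y) powr (- (real CARD('n) + 2 * s)))"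

definition C2 :: "(real^'n::finite \<Rightarrow> real) \<Rightarrow> bool" where
  "C2 f \<longleftrightarrow> (\<exists>Df :: real^'n \<Rightarrow> ((real^'n) \<Rightarrow>\<^sub>L real). \<exists>D2f :: real^'n \<Rightarrow> ((real^'n) \<Rightarrow>\<^sub>L ((real^'n) \<Rightarrow>\<^sub>L real)).
      (\<forall>x. (f has_derivative blinfun_apply (Df x)) (at x)) \<and>
      (\<forall>x. (Df has_derivative blinfun_apply (D2f x)) (at x)) \<and>
      continuous_on UNIV D2f)"

end

theory Submission
  imports Defs
begin

text \<open>
  Write \<open>a = d + 2s\<close> with \<open>d = CARD('n)\<close>, and let \<open>K\<^sub>\<epsilon>\<close> be the half space kernel with
  both of its terms cut off at distance \<open>\<epsilon>\<close>. For \<open>\<epsilon> > 0\<close> the truncated operator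
  \<open>T\<^sub>\<epsilon> \<psi> x\<close> is an absolutely convergent integral, and substituting \<open>y = \<eta>(x, w)\<close> (a
  translation where \<open>x\<^sub>k + w\<^sub>k > 0\<close>, a translation followed by the reflection elsewhere)
  turns it into \<open>\<integral>\<^sub>H (\<psi> x - \<psi> y) K\<^sub>\<epsilon>(x, y) dy\<close>. As \<open>K\<^sub>\<epsilon>\<close> is symmetric, Fubini's theorem
  and the exchange of \<open>x\<close> and \<open>y\<close> give the bilinear identity for \<open>K\<^sub>\<epsilon>\<close>.

  Both sides converge as \<open>\<epsilon> \<rightarrow> 0\<close> by dominated convergence. On the right the integrand is
  at most \<open>L\<^sub>\<phi> L\<^sub>\<psi> |x - y|\<^bsup>2 - a\<^esup>\<close> near the diagonal and \<open>4 M\<^sub>\<phi> M\<^sub>\<psi> |x - y|\<^bsup>-a\<^esup>\<close> away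
  from it. On the left, pairing \<open>w\<close> with \<open>-w\<close> where \<open>|w| < x\<^sub>k\<close> brings in the second
  difference of \<open>\<psi>\<close> and the Lipschitz bound controls the rest, so that
  \<open>|T\<^sub>\<epsilon> \<psi> x| \<le> C\<^sub>1 + C\<^sub>2 x\<^sub>k\<^bsup>-s\<^esup>\<close>, which is integrable up to the boundary because \<open>s < 1\<close>.
  The second claim holds because the right-hand side is symmetric in \<open>\<phi>\<close> and \<open>\<psi>\<close>.
\<close>

section \<open>Integrability of powers of the norm\<close>

lemma nn_integral_interval_abs_powr_finite:
  fixes c R :: real assumes c: "c > -1"
  shows "(\<integral>\<^sup>+t. indicator {-R..R} t * ennreal (\<bar>t\<bar> powr c) \<partial>lborel) < \<infinity>"
proof (cases "R \<ge> 0")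
  case False
  then show ?thesis by (simp add: indicator_def)
next
  case R: True
  obtain A where A: "((\<lambda>t. t powr c) has_integral A) {0..R}"
    using has_integral_powr_from_0[OF c R] by blast
  have A1: "((\<lambda>t. \<bar>t\<bar> powr c) has_integral A) {0..R}"
    by (rule has_integral_spike_eq[THEN iffD1, OF negligible_empty _ A]) auto
  have "((\<lambda>x. \<bar>-x\<bar> powr c) has_integral A) {-R..-0}"
    by (subst has_integral_reflect_real) (rule A1)
  then have A2: "((\<lambda>t. \<bar>t\<bar> powr c) has_integral A) {-R..0}"
    by simp
  have "((\<lambda>t. \<bar>t\<bar> powr c) has_integral (A + A)) {-R..R}"
    by (rule has_integral_combine[OF _ _ A2 A1]) (use R in auto)
  moreover have "(\<lambda>t. indicator {-R..R} t * \<bar>t\<bar> powr c) = (\<lambda>t. if t \<in> {-R..R} then \<bar>t\<bar> powr c else 0)"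
    by (auto simp: indicator_def)
  ultimately have "((\<lambda>t. indicator {-R..R} t * \<bar>t\<bar> powr c) has_integral (A + A)) UNIV"
    by (simp only: has_integral_restrict_UNIV)
  then have "(\<integral>\<^sup>+t. ennreal (indicator {-R..R} t * \<bar>t\<bar> powr c) \<partial>lborel) = ennreal (A + A)"
    by (intro nn_integral_has_integral_lborel) auto
  moreover have "(\<integral>\<^sup>+t. indicator {-R..R} t * ennreal (\<bar>t\<bar> powr c) \<partial>lborel)
      = (\<integral>\<^sup>+t. ennreal (indicator {-R..R} t * \<bar>t\<bar> powr c) \<partial>lborel)"
    by (auto intro!: nn_integral_cong simp: indicator_def)
  ultimately show ?thesis by simp
qed

lemma nn_integral_comp_abs_le:
  fixes f :: "real \<Rightarrow> ennreal" assumes [measurable]: "f \<in> borel_measurable borel"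
  shows "(\<integral>\<^sup>+t. f \<bar>t\<bar> \<partial>lborel) \<le> 2 * (\<integral>\<^sup>+t. f t \<partial>lborel)"
proof -
  have "(\<integral>\<^sup>+t. f \<bar>t\<bar> \<partial>lborel) \<le> (\<integral>\<^sup>+t. f t + f (-t) \<partial>lborel)"
    by (intro nn_integral_mono) (auto simp: abs_if)
  also have "\<dots> = (\<integral>\<^sup>+t. f t \<partial>lborel) + (\<integral>\<^sup>+t. f (-t) \<partial>lborel)"
    by (intro nn_integral_add) auto
  also have "(\<integral>\<^sup>+t. f (-t) \<partial>lborel) = (\<integral>\<^sup>+t. f t \<partial>lborel)"
    using nn_integral_real_affine[of f "-1" 0] by simp
  finally show ?thesis by (simp add: mult_2)
qed

lemma nn_integral_one_plus_abs_powr_finite: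
  fixes e :: real assumes e: "e < -1"
  shows "(\<integral>\<^sup>+t. ennreal ((1 + \<bar>t\<bar>) powr e) \<partial>lborel) < \<infinity>"
proof -
  obtain v where "((\<lambda>x. x powr e) has_integral v) {1..}"
    using has_integral_powr_to_inf[OF e, of 1] by auto
  moreover have "(\<lambda>t. indicator {1..} t * t powr e) = (\<lambda>t. if t \<in> {1..} then t powr e else 0)"
    by (auto simp: indicator_def)
  ultimately have "((\<lambda>t. indicator {1..} t * t powr e) has_integral v) UNIV"
    by (simp only: has_integral_restrict_UNIV)
  then have v: "(\<integral>\<^sup>+t. ennreal (indicator {1..} t * t powr e) \<partial>lborel) = ennreal v"
    by (intro nn_integral_has_integral_lborel) auto
  have "(\<integral>\<^sup>+t. ennreal ((1 + \<bar>t\<bar>) powr e) \<partial>lborel)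
      \<le> (\<integral>\<^sup>+t. indicator {-1..1} t + ennreal (indicator {1..} \<bar>t\<bar> * \<bar>t\<bar> powr e) \<partial>lborel)"
  proof (intro nn_integral_mono)
    fix t :: real
    show "ennreal ((1 + \<bar>t\<bar>) powr e) \<le> indicator {-1..1} t + ennreal (indicator {1..} \<bar>t\<bar> * \<bar>t\<bar> powr e)"
    proof (cases "\<bar>t\<bar> \<le> 1")
      case True
      have "1 + \<bar>t\<bar> \<noteq> 0" by linarith
      moreover have "(1 + \<bar>t\<bar>) powr e \<le> (1 + \<bar>t\<bar>) powr 0"
        using e by (intro powr_mono) auto
      ultimately have "ennreal ((1 + \<bar>t\<bar>) powr e) \<le> indicator {-1..1} t"
        using True by (auto simp: indicator_def ennreal_le_1)
      then show ?thesis
        by (rule order_trans) simp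
    next
      case False
      then have "(1 + \<bar>t\<bar>) powr e \<le> \<bar>t\<bar> powr e"
        using e by (intro powr_mono2') auto
      then show ?thesis using False by (auto simp: indicator_def)
    qed
  qed
  also have "\<dots> = 2 + (\<integral>\<^sup>+t. ennreal (indicator {1..} \<bar>t\<bar> * \<bar>t\<bar> powr e) \<partial>lborel)"
    by (subst nn_integral_add) auto
  also have "(\<integral>\<^sup>+t. ennreal (indicator {1..} \<bar>t\<bar> * \<bar>t\<bar> powr e) \<partial>lborel) \<le> 2 * ennreal v"
    using nn_integral_comp_abs_le[of "\<lambda>t. ennreal (indicator {1..} t * t powr e)"] v by simp
  finally show ?thesis
    by (auto simp: ennreal_mult_less_top top_unique intro: le_less_trans ennreal_less_top)
qed

lemma ennreal_prod_less_top:
  fixes f :: "'b \<Rightarrow> ennreal" assumes "\<And>i. i \<in> I \<Longrightarrow> f i < \<infinity>"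
  shows "(\<Prod>i\<in>I. f i) < \<infinity>"
  using assms by (induction I rule: infinite_finite_induct) (auto simp: ennreal_mult_less_top)

lemma AE_lborel_inner_Basis_nonzero: "AE w in lborel. \<forall>i\<in>Basis. (w::'a::euclidean_space) \<bullet> i \<noteq> 0"
  by (subst AE_finite_all) (auto intro: AE_lborel_inner_neq)

lemma norm_powr_le_prod_abs_powr:
  fixes w :: "'a::euclidean_space" and c :: real
  assumes c: "c \<le> 0" and nz: "\<forall>i\<in>Basis. w \<bullet> i \<noteq> 0"
  shows "norm w powr (real DIM('a) * c) \<le> (\<Prod>i\<in>Basis. \<bar>w \<bullet> i\<bar> powr c)"
proof -
  have "w \<noteq> 0" using nz by (metis SOME_Basis inner_zero_left)
  then have "norm w powr (real DIM('a) * c) = (\<Prod>i\<in>(Basis::'a set). norm w powr c)"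
    by (simp add: prod_constant powr_powr[symmetric] powr_realpow mult.commute)
  also have "\<dots> \<le> (\<Prod>i\<in>Basis. \<bar>w \<bullet> i\<bar> powr c)"
    by (intro prod_mono conjI powr_mono2' Basis_le_norm) (use c nz in auto)
  finally show ?thesis .
qed

lemma one_plus_norm_powr_le_prod:
  fixes w :: "'a::euclidean_space" and c :: real assumes c: "c \<le> 0"
  shows "(1 + norm w) powr (real DIM('a) * c) \<le> (\<Prod>i\<in>Basis. (1 + \<bar>w \<bullet> i\<bar>) powr c)"
proof -
  have "(\<Prod>i\<in>(Basis::'a set). 1 + \<bar>w \<bullet> i\<bar>) \<le> (\<Prod>i\<in>(Basis::'a set). 1 + norm w)"
    by (intro prod_mono) (auto simp: Basis_le_norm)
  also have "\<dots> = (1 + norm w) powr DIM('a)"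
    by (simp add: prod_constant powr_realpow add_pos_nonneg)
  finally have le: "(\<Prod>i\<in>(Basis::'a set). 1 + \<bar>w \<bullet> i\<bar>) \<le> (1 + norm w) powr DIM('a)" .
  have "(1 + norm w) powr (real DIM('a) * c) = ((1 + norm w) powr DIM('a)) powr c"
    by (simp add: powr_powr)
  also have "\<dots> \<le> (\<Prod>i\<in>(Basis::'a set). 1 + \<bar>w \<bullet> i\<bar>) powr c"
    using c le by (intro powr_mono2') (auto intro!: prod_pos)
  also have "\<dots> = (\<Prod>i\<in>Basis. (1 + \<bar>w \<bullet> i\<bar>) powr c)"
    by (rule prod_powr_distrib)
  finally show ?thesis .
qed

lemma borel_measurable_norm_powr[measurable]:
  "(\<lambda>x::'a::euclidean_space. norm x powr b) \<in> borel_measurable borel"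
  by (intro powr_real_measurable) auto

lemma ball_sets_borel[measurable]: "ball (c::'a::euclidean_space) r \<in> sets borel"
  by (simp add: borel_open)

lemma integrable_ball_norm_powr:
  fixes b R :: real assumes b: "b > - real DIM('a::euclidean_space)"
  shows "integrable lborel (\<lambda>w::'a. indicator (ball 0 R) w * norm w powr b)"
proof (rule integrableI_nonneg)
  show "AE w in lborel. 0 \<le> indicator (ball 0 R) w * norm (w::'a) powr b" by simp
  show "(\<integral>\<^sup>+w. ennreal (indicator (ball 0 R) w * norm (w::'a) powr b) \<partial>lborel) < \<infinity>"
  proof (cases "b \<ge> 0")
    case True
    have "(\<integral>\<^sup>+w. ennreal (indicator (ball 0 R) w * norm (w::'a) powr b) \<partial>lborel)
        \<le> (\<integral>\<^sup>+w. ennreal (max R 0 powr b) * indicator (ball (0::'a) R) w \<partial>lborel)"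
      using True by (intro nn_integral_mono) (auto simp: indicator_def intro!: ennreal_leI powr_mono2)
    also have "\<dots> = ennreal (max R 0 powr b) * emeasure lborel (ball (0::'a) R)"
      by (subst nn_integral_cmult_indicator) auto
    also have "\<dots> < \<infinity>"
      using emeasure_lborel_ball_finite[of "0::'a" R] by (simp add: ennreal_mult_less_top)
    finally show ?thesis .
  next
    case False
    define c where "c = b / DIM('a)"
    have c: "c > -1" "c \<le> 0" "b = real DIM('a) * c"
      using b False by (auto simp: c_def field_simps)
    have "(\<integral>\<^sup>+w. ennreal (indicator (ball 0 R) w * norm (w::'a) powr b) \<partial>lborel)
        \<le> (\<integral>\<^sup>+w. (\<Prod>i\<in>Basis. indicator {-R..R} ((w::'a) \<bullet> i) * ennreal (\<bar>w \<bullet> i\<bar> powr c)) \<partial>lborel)"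
      using AE_lborel_inner_Basis_nonzero
    proof (intro nn_integral_mono_AE, eventually_elim)
      fix w :: 'a assume nz: "\<forall>i\<in>Basis. w \<bullet> i \<noteq> 0"
      show "ennreal (indicator (ball 0 R) w * norm w powr b)
          \<le> (\<Prod>i\<in>Basis. indicator {-R..R} (w \<bullet> i) * ennreal (\<bar>w \<bullet> i\<bar> powr c))"
      proof (cases "w \<in> ball 0 R")
        case True
        then have "indicator {-R..R} (w \<bullet> i) = (1::ennreal)" if "i \<in> Basis" for i
          using Basis_le_norm[OF that, of w] by (auto simp: indicator_def abs_le_iff)
        then show ?thesis
          using True norm_powr_le_prod_abs_powr[OF c(2) nz]
          by (simp add: c(3) prod_ennreal ennreal_leI)
      qed simp
    qed
    also have "\<dots> = (\<Prod>i\<in>(Basis::'a set). (\<integral>\<^sup>+t. indicator {-R..R} t * ennreal (\<bar>t\<bar> powr c) \<partial>lborel))"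
      by (rule nn_integral_lborel_prod) auto
    also have "\<dots> < \<infinity>"
      by (intro ennreal_prod_less_top nn_integral_interval_abs_powr_finite c(1))
    finally show ?thesis .
  qed
qed simp

lemma integrable_outside_ball_norm_powr:
  fixes b \<rho> :: real assumes b: "b < - real DIM('a::euclidean_space)" and \<rho>: "\<rho> > 0"
  shows "integrable lborel (\<lambda>w::'a. indicator {w. \<rho> \<le> norm w} w * norm w powr b)"
proof (rule integrableI_nonneg)
  show "AE w in lborel. 0 \<le> indicator {w. \<rho> \<le> norm w} w * norm (w::'a) powr b" by simp
  define c where "c = b / DIM('a)"
  have c: "c < -1" "b = real DIM('a) * c"
    using b by (auto simp: c_def field_simps)
  define K where "K = (\<rho> / (1 + \<rho>)) powr b"
  have "ennreal (indicator {w. \<rho> \<le> norm w} w * norm w powr b)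
      \<le> ennreal K * (\<Prod>i\<in>Basis. ennreal ((1 + \<bar>w \<bullet> i\<bar>) powr c))" for w :: 'a
  proof (cases "\<rho> \<le> norm w")
    case True
    have "\<rho> / (1 + \<rho>) * (1 + norm w) \<le> norm w"
      using True \<rho> by (simp add: field_simps)
    then have "norm w powr b \<le> (\<rho> / (1 + \<rho>) * (1 + norm w)) powr b"
      using \<rho> b by (intro powr_mono2') (auto intro!: divide_pos_pos mult_pos_pos add_pos_nonneg)
    also have "\<dots> = K * (1 + norm w) powr b"
      using \<rho> by (simp add: K_def powr_mult[symmetric])
    also have "\<dots> \<le> K * (\<Prod>i\<in>Basis. (1 + \<bar>w \<bullet> i\<bar>) powr c)"
      using one_plus_norm_powr_le_prod[of c w] c by (auto simp: K_def intro: mult_left_mono)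
    finally show ?thesis
      using True by (simp add: K_def prod_ennreal ennreal_mult'[symmetric] ennreal_leI)
  qed simp
  then have "(\<integral>\<^sup>+w. ennreal (indicator {w. \<rho> \<le> norm w} w * norm (w::'a) powr b) \<partial>lborel)
      \<le> ennreal K * (\<integral>\<^sup>+w. (\<Prod>i\<in>Basis. ennreal ((1 + \<bar>(w::'a) \<bullet> i\<bar>) powr c)) \<partial>lborel)"
    by (subst nn_integral_cmult[symmetric]) (auto intro: nn_integral_mono)
  also have "(\<integral>\<^sup>+w. (\<Prod>i\<in>Basis. ennreal ((1 + \<bar>(w::'a) \<bullet> i\<bar>) powr c)) \<partial>lborel)
      = (\<Prod>i\<in>(Basis::'a set). (\<integral>\<^sup>+t. ennreal ((1 + \<bar>t\<bar>) powr c) \<partial>lborel))"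
    by (rule nn_integral_lborel_prod) auto
  also have "ennreal K * \<dots> < \<infinity>"
    using nn_integral_one_plus_abs_powr_finite[OF c(1)]
    by (simp add: ennreal_mult_less_top power_less_top_ennreal)
  finally show "(\<integral>\<^sup>+w. ennreal (indicator {w. \<rho> \<le> norm w} w * norm (w::'a) powr b) \<partial>lborel) < \<infinity>" .
qed simp

lemma norm_sq_mult_powr: "(norm w)\<^sup>2 * norm w powr (- a) = norm w powr (2 - a)"
proof (cases "w = 0")
  case False
  have "norm w powr (2 - a) = norm w powr 2 * norm w powr (- a)"
    using powr_add[of "norm w" 2 "- a"] by simp
  also have "norm w powr 2 = (norm w)\<^sup>2"
    using False by (simp add: powr_numeral)
  finally show ?thesis by simp
qed simp

definition powr_weight :: "real \<Rightarrow> real \<Rightarrow> 'a::real_normed_vector \<Rightarrow> real" where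
  "powr_weight p q w = (if norm w < 1 then norm w powr p else norm w powr q)"

lemma powr_weight_nonneg: "powr_weight p q w \<ge> 0"
  by (simp add: powr_weight_def)

lemma powr_weight_minus[simp]: "powr_weight p q (- w) = powr_weight p q w"
  by (simp add: powr_weight_def)

lemma borel_measurable_powr_weight[measurable]:
  "powr_weight p q \<in> borel_measurable (borel :: 'a::euclidean_space measure)"
  unfolding powr_weight_def by measurable

lemma integrable_powr_weight:
  assumes "p > - real DIM('a::euclidean_space)" "q < - real DIM('a)"
  shows "integrable lborel (powr_weight p q :: 'a \<Rightarrow> real)"
proof -
  have "powr_weight p q = (\<lambda>w::'a. indicator (ball 0 1) w * norm w powr p
                                   + indicator {w. 1 \<le> norm w} w * norm w powr q)"
    by (auto simp: powr_weight_def indicator_def fun_eq_iff)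
  then show ?thesis
    using assms by (simp add: integrable_ball_norm_powr integrable_outside_ball_norm_powr)
qed

section \<open>Reflection across the boundary\<close>

lemma reflect_nth: "reflect k v $ i = (if i = k then - (v $ i) else v $ i)"
  by (simp add: reflect_def)

lemma reflect_reflect[simp]: "reflect k (reflect k x) = x"
  by (simp add: reflect_def vec_eq_iff)

lemma reflect_diff: "reflect k (x - y) = reflect k x - reflect k y"
  by (simp add: reflect_def vec_eq_iff)

lemma norm_reflect[simp]: "norm (reflect k x) = norm x"
  by (intro order.antisym norm_le_componentwise_cart) (simp_all add: reflect_nth)

lemma norm_diff_reflect_commute: "norm (x - reflect k y) = norm (y - reflect k x)"
proof -
  have "norm (x - reflect k y) = norm (reflect k (x - reflect k y))" by simp
  also have "\<dots> = norm (y - reflect k x)"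
    by (simp add: reflect_diff norm_minus_commute)
  finally show ?thesis .
qed

lemma norm_diff_le_norm_diff_reflect:
  assumes "x $ k \<ge> 0" "y $ k \<ge> 0"
  shows "norm (x - y) \<le> norm (x - reflect k y)"
  by (rule norm_le_componentwise_cart) (use assms in \<open>auto simp: reflect_nth\<close>)

lemma norm_eta_diff_le:
  assumes "x $ k > 0" shows "norm (eta k x w - x) \<le> norm w"
  using assms unfolding eta_def
  by (auto intro!: norm_le_componentwise_cart simp: reflect_nth)

lemma eta_eq_add: assumes "norm w < x $ k" shows "eta k x w = x + w"
proof -
  have "x $ k + w $ k \<ge> 0"
    using component_le_norm_cart[of w k] assms by linarith
  then show ?thesis by (simp add: eta_def)
qed

lemma reflect_measurable[measurable]:
  fixes k :: "'n::finite" shows "reflect k \<in> borel_measurable borel"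
proof (intro borel_measurable_continuous_onI)
  have "continuous_on UNIV (\<lambda>x::real^'n. if i = k then - x $ i else x $ i)" for i
    by (cases "i = k") (auto intro!: continuous_intros)
  then show "continuous_on UNIV (reflect k :: real^'n \<Rightarrow> _)"
    unfolding reflect_def by (rule continuous_on_vec_lambda)
qed

lemma reflect_measurable_raw[measurable (raw)]:
  "f \<in> borel_measurable M \<Longrightarrow> (\<lambda>z. reflect k (f z)) \<in> borel_measurable M"
  using measurable_compose[OF _ reflect_measurable] by blast

lemma vec_nth_measurable_raw[measurable (raw)]:
  fixes f :: "'b \<Rightarrow> real^'n::finite"
  shows "f \<in> borel_measurable M \<Longrightarrow> (\<lambda>z. f z $ i) \<in> borel_measurable M"
  using measurable_compose[OF _ borel_measurable_continuous_onI[OF linear_continuous_on[OF bounded_linear_vec_nth]]]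
  by blast

lemma eta_measurable_raw[measurable (raw)]:
  fixes f g :: "'b \<Rightarrow> real^'n::finite"
  assumes [measurable]: "f \<in> borel_measurable M" "g \<in> borel_measurable M"
  shows "(\<lambda>z. eta k (f z) (g z)) \<in> borel_measurable M"
  unfolding eta_def by measurable

lemma halfspace_sets_borel[measurable]: "halfspace k \<in> sets borel"
  unfolding halfspace_def by measurable

lemma lborel_distr_reflect: "distr lborel borel (reflect k) = (lborel :: (real^'n::finite) measure)"
proof -
  define c :: "real^'n \<Rightarrow> real" where "c j = (if j = axis k 1 then -1 else 1)" for j
  have "lborel = density (distr lborel borel (\<lambda>x. 0 + (\<Sum>j\<in>Basis. (c j * (x \<bullet> j)) *\<^sub>R j)))
      (\<lambda>_. \<Prod>j\<in>Basis. \<bar>c j\<bar>)"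
    by (rule lborel_affine_euclidean) (simp add: c_def)
  also have "(\<lambda>x. 0 + (\<Sum>j\<in>Basis. (c j * (x \<bullet> j)) *\<^sub>R j)) = reflect k"
  proof (rule ext, rule euclidean_eqI)
    fix x b :: "real^'n" assume b: "b \<in> Basis"
    have "(\<Sum>j\<in>Basis. (c j * (x \<bullet> j)) *\<^sub>R j) \<bullet> b = (\<Sum>j\<in>Basis. if j = b then c b * (x \<bullet> b) else 0)"
      unfolding inner_sum_left by (intro sum.cong) (auto simp: inner_Basis b)
    also have "\<dots> = c b * (x \<bullet> b)"
      using b by (simp add: sum.delta')
    finally have "(\<Sum>j\<in>Basis. (c j * (x \<bullet> j)) *\<^sub>R j) \<bullet> b = c b * (x \<bullet> b)" .
    moreover obtain i where "b = axis i 1" using b by (auto simp: Basis_vec_def)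
    ultimately show "(0 + (\<Sum>j\<in>Basis. (c j * (x \<bullet> j)) *\<^sub>R j)) \<bullet> b = reflect k x \<bullet> b"
      by (auto simp: c_def cart_eq_inner_axis[symmetric] reflect_nth axis_eq_axis)
  qed
  also have "(\<Prod>j\<in>Basis. \<bar>c j\<bar>) = 1"
    by (intro prod.neutral) (simp add: c_def)
  finally show ?thesis by (simp add: density_1)
qed

lemma integrable_ball_halfspace_coord_powr:
  fixes k :: "'n::finite" assumes s: "s < 1"
  shows "integrable lborel (\<lambda>x::real^'n. indicator (ball 0 R \<inter> halfspace k) x * (x $ k) powr (- s))"
proof (rule integrableI_nonneg)
  show "AE x in lborel. 0 \<le> indicator (ball 0 R \<inter> halfspace k) x * ((x::real^'n) $ k) powr (- s)"
    by (intro AE_I2) simp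
  define f where "f b t = (if b = axis k (1::real) then indicator {-R..R} t * ennreal (\<bar>t\<bar> powr (- s))
    else indicator {-R..R} t)" for b :: "real^'n" and t :: real
  have [measurable]: "f b \<in> borel_measurable borel" for b
    unfolding f_def by measurable
  have "ennreal (indicator (ball 0 R \<inter> halfspace k) x * (x $ k) powr (- s)) \<le> (\<Prod>b\<in>Basis. f b (x \<bullet> b))" for x :: "real^'n"
  proof (cases "x \<in> ball 0 R \<inter> halfspace k")
    case True
    have "f b (x \<bullet> b) = (if b = axis k 1 then ennreal (\<bar>x \<bullet> b\<bar> powr (- s)) else 1)" if "b \<in> Basis" for b
      using Basis_le_norm[OF that, of x] True by (auto simp: f_def indicator_def abs_le_iff)
    then have "(\<Prod>b\<in>Basis. f b (x \<bullet> b)) = (\<Prod>b\<in>Basis. if b = axis k 1 then ennreal (\<bar>x \<bullet> b\<bar> powr (- s)) else 1)"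
      by (intro prod.cong) auto
    also have "\<dots> = ennreal (\<bar>x \<bullet> axis k 1\<bar> powr (- s))"
      by (subst prod.delta) (auto simp: axis_in_Basis_iff)
    also have "\<bar>x \<bullet> axis k 1\<bar> = x $ k"
      using True by (simp add: inner_axis halfspace_def)
    finally show ?thesis
      using True by simp
  next
    case False
    then have "indicator (ball 0 R \<inter> halfspace k) x = (0::real)"
      by (rule indicator_simps(2))
    then show ?thesis by simp
  qed
  then have "(\<integral>\<^sup>+x. ennreal (indicator (ball 0 R \<inter> halfspace k) x * (x $ k) powr (- s)) \<partial>lborel)
      \<le> (\<integral>\<^sup>+x. (\<Prod>b\<in>Basis. f b ((x::real^'n) \<bullet> b)) \<partial>lborel)"
    by (intro nn_integral_mono)
  also have "\<dots> = (\<Prod>b\<in>Basis. (\<integral>\<^sup>+t. f b t \<partial>lborel))"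
    by (rule nn_integral_lborel_prod) auto
  also have "\<dots> < \<infinity>"
  proof (rule ennreal_prod_less_top)
    have "(\<integral>\<^sup>+t. indicator {-R..R} t \<partial>lborel) < \<infinity>"
      by (simp add: emeasure_lborel_Icc_eq)
    then show "(\<integral>\<^sup>+t. f b t \<partial>lborel) < \<infinity>" for b
      using nn_integral_interval_abs_powr_finite[of "- s" R] s by (cases "b = axis k 1") (simp_all add: f_def)
  qed
  finally show "(\<integral>\<^sup>+x. ennreal (indicator (ball 0 R \<inter> halfspace k) x * (x $ k) powr (- s)) \<partial>lborel) < \<infinity>" .
qed simp

lemma lborel_distr_minus: "distr lborel borel (\<lambda>y. x - y) = (lborel :: 'a::euclidean_space measure)"
  using lborel_affine[of "-1" x] by (simp add: density_1)

lemma lborel_distr_uminus_euclidean: "distr lborel borel uminus = (lborel :: 'a::euclidean_space measure)"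
  using lborel_affine[of "-1" "0::'a"] by (simp add: density_1)

context
  fixes T :: "'a::euclidean_space \<Rightarrow> 'a"
  assumes T_measurable[measurable]: "T \<in> borel_measurable borel"
    and lborel_invariant: "distr lborel borel T = lborel"
begin

lemma lborel_integral_invariant:
  fixes g :: "'a \<Rightarrow> real" assumes [measurable]: "g \<in> borel_measurable borel"
  shows "(\<integral>y. g (T y) \<partial>lborel) = (\<integral>w. g w \<partial>lborel)"
  using integral_distr[of T lborel borel g] by (simp add: lborel_invariant)

lemma lborel_integrable_invariant_iff:
  fixes g :: "'a \<Rightarrow> real" assumes [measurable]: "g \<in> borel_measurable borel"
  shows "integrable lborel (\<lambda>y. g (T y)) \<longleftrightarrow> integrable lborel g"
  using integrable_distr_eq[of T lborel borel g] by (simp add: lborel_invariant)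

lemma lborel_nn_integral_invariant:
  fixes g :: "'a \<Rightarrow> ennreal" assumes [measurable]: "g \<in> borel_measurable borel"
  shows "(\<integral>\<^sup>+y. g (T y) \<partial>lborel) = (\<integral>\<^sup>+w. g w \<partial>lborel)"
  using nn_integral_distr[of T lborel borel g] by (simp add: lborel_invariant)

end

lemma integral_dominated_convergence_at_right:
  fixes F :: "real \<Rightarrow> 'a \<Rightarrow> real"
  assumes F_measurable: "\<And>\<epsilon>. \<epsilon> > 0 \<Longrightarrow> F \<epsilon> \<in> borel_measurable M" and w: "integrable M w"
    and lim: "\<And>x. x \<in> space M \<Longrightarrow> ((\<lambda>\<epsilon>. F \<epsilon> x) \<longlongrightarrow> G x) (at_right 0)"
    and bound: "\<And>\<epsilon> x. \<epsilon> > 0 \<Longrightarrow> x \<in> space M \<Longrightarrow> \<bar>F \<epsilon> x\<bar> \<le> w x"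
  shows "((\<lambda>\<epsilon>. integral\<^sup>L M (F \<epsilon>)) \<longlongrightarrow> integral\<^sup>L M G) (at_right 0)"
proof -
  have seq: "(\<lambda>i. F (X i) x) \<longlonglongrightarrow> G x" if "\<And>i. X i > 0" "X \<longlonglongrightarrow> 0" "x \<in> space M" for X x
  proof -
    have "filterlim X (at_right 0) sequentially"
      using that(1,2) by (auto simp: filterlim_at intro!: always_eventually less_imp_neq[symmetric])
    then show ?thesis by (rule filterlim_compose[OF lim[OF that(3)]])
  qed
  have inv_Suc: "(\<lambda>i. 1 / real (Suc i)) \<longlonglongrightarrow> 0"
    by (rule LIMSEQ_Suc[OF lim_const_over_n])
  have G_measurable: "G \<in> borel_measurable M"
  proof (rule borel_measurable_LIMSEQ_metric)
    show "F (1 / real (Suc i)) \<in> borel_measurable M" for i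
      by (rule F_measurable) simp
    show "(\<lambda>i. F (1 / real (Suc i)) x) \<longlonglongrightarrow> G x" if "x \<in> space M" for x
      by (rule seq[OF _ inv_Suc that]) simp
  qed
  show ?thesis
    unfolding tendsto_at_iff_sequentially comp_def
  proof (intro allI impI)
    fix X :: "nat \<Rightarrow> real" assume "\<forall>i. X i \<in> {0<..} - {0}" and X: "X \<longlonglongrightarrow> 0"
    then have pos: "X i > 0" for i by auto
    show "(\<lambda>i. integral\<^sup>L M (F (X i))) \<longlonglongrightarrow> integral\<^sup>L M G"
    proof (rule integral_dominated_convergence[OF G_measurable _ w])
      show "F (X i) \<in> borel_measurable M" for i
        by (rule F_measurable[OF pos])
      show "AE x in M. (\<lambda>i. F (X i) x) \<longlonglongrightarrow> G x"
        by (rule AE_I2) (rule seq[OF pos X])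
      show "AE x in M. norm (F (X i) x) \<le> w x" for i
        by (rule AE_I2) (simp add: bound[OF pos])
    qed
  qed
qed

lemma integrable_pair_indicator_ball_fst:
  fixes g :: "'a::euclidean_space \<Rightarrow> 'a \<Rightarrow> real"
  assumes [measurable]: "(\<lambda>z. g (fst z) (snd z)) \<in> borel_measurable (lborel \<Otimes>\<^sub>M lborel)"
    and nonneg: "\<And>x y. g x y \<ge> 0"
    and fibre: "\<And>x. (\<integral>\<^sup>+y. g x y \<partial>lborel) \<le> C" and C: "C < \<infinity>"
  shows "integrable (lborel \<Otimes>\<^sub>M lborel) (\<lambda>z. indicator (ball 0 R) (fst z) * g (fst z) (snd z))"
proof (rule integrableI_nonneg)
  show "AE z in lborel \<Otimes>\<^sub>M lborel. 0 \<le> indicator (ball 0 R) (fst z) * g (fst z) (snd z)"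
    using nonneg by simp
  have "(\<integral>\<^sup>+z. ennreal (indicator (ball 0 R) (fst z) * g (fst z) (snd z)) \<partial>(lborel \<Otimes>\<^sub>M lborel))
      = (\<integral>\<^sup>+x. indicator (ball 0 R) x * (\<integral>\<^sup>+y. g x y \<partial>lborel) \<partial>lborel)"
    by (subst lborel.nn_integral_fst[symmetric])
       (auto intro!: nn_integral_cong simp: nonneg indicator_def)
  also have "\<dots> \<le> (\<integral>\<^sup>+x. C * indicator (ball 0 R) (x::'a) \<partial>lborel)"
    by (rule nn_integral_mono) (use fibre in \<open>auto simp: indicator_def\<close>)
  also have "\<dots> = C * emeasure lborel (ball (0::'a) R)"
    by (simp add: nn_integral_cmult_indicator)
  also have "\<dots> < \<infinity>"
    using C emeasure_lborel_ball_finite[of "0::'a" R] by (simp add: ennreal_mult_less_top)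
  finally show "(\<integral>\<^sup>+z. ennreal (indicator (ball 0 R) (fst z) * g (fst z) (snd z)) \<partial>(lborel \<Otimes>\<^sub>M lborel)) < \<infinity>" .
qed simp

lemma (in sigma_finite_measure) pair_integral_symmetrize:
  fixes \<phi> \<psi> :: "'a \<Rightarrow> real" and K :: "'a \<Rightarrow> 'a \<Rightarrow> real"
  assumes K_commute: "\<And>x y. K x y = K y x"
    and int: "integrable (M \<Otimes>\<^sub>M M) (\<lambda>z. \<phi> (fst z) * (\<psi> (fst z) - \<psi> (snd z)) * K (fst z) (snd z))"
  shows "integrable (M \<Otimes>\<^sub>M M) (\<lambda>z. (\<phi> (fst z) - \<phi> (snd z)) * (\<psi> (fst z) - \<psi> (snd z)) * K (fst z) (snd z))"
    and "(\<integral>z. \<phi> (fst z) * (\<psi> (fst z) - \<psi> (snd z)) * K (fst z) (snd z) \<partial>(M \<Otimes>\<^sub>M M))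
       = 1/2 * (\<integral>z. (\<phi> (fst z) - \<phi> (snd z)) * (\<psi> (fst z) - \<psi> (snd z)) * K (fst z) (snd z) \<partial>(M \<Otimes>\<^sub>M M))"
proof -
  interpret pair_sigma_finite M M ..
  define F where "F z = \<phi> (fst z) * (\<psi> (fst z) - \<psi> (snd z)) * K (fst z) (snd z)" for z
  define G where "G z = - (\<phi> (snd z) * (\<psi> (fst z) - \<psi> (snd z)) * K (fst z) (snd z))" for z
  have swap: "G = (\<lambda>(x, y). F (y, x))"
  proof (rule ext, clarify)
    fix x y
    show "G (x, y) = F (y, x)"
      using K_commute[of y x] by (simp add: F_def G_def algebra_simps)
  qed
  have int_F: "integrable (M \<Otimes>\<^sub>M M) F" using int by (simp add: F_def[abs_def])
  have int_G: "integrable (M \<Otimes>\<^sub>M M) G"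
    unfolding swap by (rule integrable_product_swap[OF int_F])
  have int_G_eq: "integral\<^sup>L (M \<Otimes>\<^sub>M M) G = integral\<^sup>L (M \<Otimes>\<^sub>M M) F"
    unfolding swap by (rule integral_product_swap) (use int_F in auto)
  have sum: "(\<lambda>z. (\<phi> (fst z) - \<phi> (snd z)) * (\<psi> (fst z) - \<psi> (snd z)) * K (fst z) (snd z)) = (\<lambda>z. F z + G z)"
    by (auto simp: F_def G_def fun_eq_iff algebra_simps)
  show "integrable (M \<Otimes>\<^sub>M M) (\<lambda>z. (\<phi> (fst z) - \<phi> (snd z)) * (\<psi> (fst z) - \<psi> (snd z)) * K (fst z) (snd z))"
    unfolding sum using int_F int_G by simp
  show "(\<integral>z. \<phi> (fst z) * (\<psi> (fst z) - \<psi> (snd z)) * K (fst z) (snd z) \<partial>(M \<Otimes>\<^sub>M M))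
       = 1/2 * (\<integral>z. (\<phi> (fst z) - \<phi> (snd z)) * (\<psi> (fst z) - \<psi> (snd z)) * K (fst z) (snd z) \<partial>(M \<Otimes>\<^sub>M M))"
    unfolding sum using int_F int_G int_G_eq by (simp add: F_def[abs_def])
qed

lemma iterated_set_integral_eq_pair_integral:
  fixes F :: "'a::euclidean_space \<Rightarrow> 'a \<Rightarrow> real"
  assumes "integrable (lborel \<Otimes>\<^sub>M lborel) (\<lambda>z. indicator A (fst z) * indicator A (snd z) * F (fst z) (snd z))"
  shows "(LINT x:A|lborel. LINT y:A|lborel. F x y)
       = (\<integral>z. indicator A (fst z) * indicator A (snd z) * F (fst z) (snd z) \<partial>(lborel \<Otimes>\<^sub>M lborel))"
proof -
  have "(LINT x:A|lborel. LINT y:A|lborel. F x y)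
      = (\<integral>x. \<integral>y. indicator A x * indicator A y * F x y \<partial>lborel \<partial>lborel)"
    unfolding set_lebesgue_integral_def
    by (intro Bochner_Integration.integral_cong) (auto simp: indicator_def)
  also have "\<dots> = (\<integral>z. indicator A (fst z) * indicator A (snd z) * F (fst z) (snd z) \<partial>(lborel \<Otimes>\<^sub>M lborel))"
    using lborel_pair.integral_fst'[OF assms] by simp
  finally show ?thesis .
qed

section \<open>The truncated kernel and operator\<close>

definition cutoff_powr :: "real \<Rightarrow> real \<Rightarrow> 'a::real_normed_vector \<Rightarrow> real" where
  "cutoff_powr a \<epsilon> w = (if \<epsilon> < norm w then norm w powr (-a) else 0)"

lemma borel_measurable_cutoff_powr[measurable]:
  "cutoff_powr a \<epsilon> \<in> borel_measurable (borel :: 'a::euclidean_space measure)"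
  unfolding cutoff_powr_def by measurable

lemma cutoff_powr_nonneg: "cutoff_powr a \<epsilon> w \<ge> 0"
  by (simp add: cutoff_powr_def)

lemma cutoff_powr_le: "0 \<le> \<epsilon> \<Longrightarrow> cutoff_powr a \<epsilon> w \<le> cutoff_powr a 0 w"
  by (simp add: cutoff_powr_def)

text \<open>Since \<open>0 powr _ = 0\<close>, the cutoff at level \<open>0\<close> is the plain kernel \<open>norm w powr -a\<close>.\<close>

lemma cutoff_powr_zero: "cutoff_powr a 0 w = norm w powr (-a)"
  by (simp add: cutoff_powr_def)

lemma cutoff_powr_tendsto: "((\<lambda>\<epsilon>. cutoff_powr a \<epsilon> w) \<longlongrightarrow> cutoff_powr a 0 w) (at_right 0)"
proof (cases "w = 0")
  case False
  then have "\<forall>\<^sub>F \<epsilon> in at_right 0. \<epsilon> < norm w"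
    using eventually_at_right_real[of 0 "norm w"] by (simp add: eventually_mono)
  then have "\<forall>\<^sub>F \<epsilon> in at_right 0. cutoff_powr a \<epsilon> w = cutoff_powr a 0 w"
    by eventually_elim (simp add: cutoff_powr_def)
  then show ?thesis by (rule tendsto_eventually)
next
  case True
  then have "cutoff_powr a \<epsilon> w = 0" for \<epsilon>
    by (simp add: cutoff_powr_def)
  then show ?thesis by simp
qed

lemma integrable_cutoff_powr:
  assumes "a > real DIM('a::euclidean_space)" "\<epsilon> > 0"
  shows "integrable lborel (cutoff_powr a \<epsilon> :: 'a \<Rightarrow> real)"
proof (rule Bochner_Integration.integrable_bound)
  show "integrable lborel (\<lambda>w::'a. indicator {w. \<epsilon> \<le> norm w} w * norm w powr (-a))"
    using assms by (intro integrable_outside_ball_norm_powr) auto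
  show "AE w in lborel. norm (cutoff_powr a \<epsilon> w) \<le> norm (indicator {w. \<epsilon> \<le> norm w} w * norm (w::'a) powr (-a))"
    by (auto simp: cutoff_powr_def indicator_def)
qed simp

definition half_kernel :: "real \<Rightarrow> 'n::finite \<Rightarrow> real \<Rightarrow> real^'n \<Rightarrow> real^'n \<Rightarrow> real" where
  "half_kernel s k \<epsilon> x y =
     cutoff_powr (real CARD('n) + 2 * s) \<epsilon> (x - y) + cutoff_powr (real CARD('n) + 2 * s) \<epsilon> (x - reflect k y)"

lemma half_kernel_commute: "half_kernel s k \<epsilon> x y = half_kernel s k \<epsilon> y x"
  unfolding half_kernel_def cutoff_powr_def by (simp add: norm_minus_commute norm_diff_reflect_commute[of x k y])

lemma half_kernel_nonneg: "half_kernel s k \<epsilon> x y \<ge> 0"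
  by (simp add: half_kernel_def cutoff_powr_nonneg)

lemma half_kernel_measurable[measurable]:
  "(\<lambda>z. half_kernel s k \<epsilon> (fst z) (snd z)) \<in> borel_measurable (lborel \<Otimes>\<^sub>M lborel)"
  unfolding half_kernel_def by measurable

lemma half_kernel_le:
  fixes x y :: "real^'n::finite"
  assumes "0 \<le> \<epsilon>" "0 < s" "0 \<le> x $ k" "0 \<le> y $ k" "x \<noteq> y"
  shows "half_kernel s k \<epsilon> x y \<le> 2 * norm (x - y) powr (- (real CARD('n) + 2 * s))"
proof -
  have "norm (x - reflect k y) powr (- (real CARD('n) + 2 * s)) \<le> norm (x - y) powr (- (real CARD('n) + 2 * s))"
    using assms norm_diff_le_norm_diff_reflect[of x k y] by (intro powr_mono2') auto
  moreover have "half_kernel s k \<epsilon> x y \<le> half_kernel s k 0 x y"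
    unfolding half_kernel_def using assms(1) by (intro add_mono cutoff_powr_le)
  ultimately show ?thesis
    by (simp add: half_kernel_def cutoff_powr_zero)
qed

lemma kernel_half_eq_half_kernel: "kernel_half s k x y = c_ds s k * half_kernel s k 0 x y"
  by (simp add: kernel_half_def half_kernel_def cutoff_powr_zero)

lemma nn_integral_half_kernel:
  fixes x :: "real^'n::finite"
  shows "(\<integral>\<^sup>+y. half_kernel s k \<epsilon> x y \<partial>lborel) = 2 * (\<integral>\<^sup>+w. cutoff_powr (real CARD('n) + 2 * s) \<epsilon> (w::real^'n) \<partial>lborel)"
proof -
  let ?c = "cutoff_powr (real CARD('n) + 2 * s) \<epsilon> :: real^'n \<Rightarrow> real"
  have diff: "(\<integral>\<^sup>+y. ?c (x - y) \<partial>lborel) = (\<integral>\<^sup>+w. ?c w \<partial>lborel)"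
    by (rule lborel_nn_integral_invariant[OF _ lborel_distr_minus]; measurable)
  have "(\<integral>\<^sup>+y. half_kernel s k \<epsilon> x y \<partial>lborel) = (\<integral>\<^sup>+y. ennreal (?c (x - y)) + ennreal (?c (x - reflect k y)) \<partial>lborel)"
    unfolding half_kernel_def by (intro nn_integral_cong ennreal_plus cutoff_powr_nonneg)
  also have "\<dots> = (\<integral>\<^sup>+y. ?c (x - y) \<partial>lborel) + (\<integral>\<^sup>+y. ?c (x - reflect k y) \<partial>lborel)"
    by (rule nn_integral_add; measurable)
  also have "(\<integral>\<^sup>+y. ?c (x - reflect k y) \<partial>lborel) = (\<integral>\<^sup>+y. ?c (x - y) \<partial>lborel)"
    by (rule lborel_nn_integral_invariant[OF _ lborel_distr_reflect, where g="\<lambda>y. ennreal (?c (x - y))"]; measurable)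
  finally show ?thesis
    by (simp only: diff mult_2[of "\<integral>\<^sup>+w. ?c w \<partial>lborel"])
qed

definition trunc_frac_lap :: "real \<Rightarrow> 'n::finite \<Rightarrow> (real^'n \<Rightarrow> real) \<Rightarrow> real \<Rightarrow> real^'n \<Rightarrow> real" where
  "trunc_frac_lap s k \<psi> \<epsilon> x =
     (LINT w:{w. \<epsilon> < norm w}|lborel. (\<psi> x - \<psi> (eta k x w)) / norm w powr (real CARD('n) + 2 * s))"

lemma frac_lap_SR_eq_Lim: "frac_lap_SR s k \<psi> x = c_ds s k * Lim (at_right 0) (\<lambda>\<epsilon>. trunc_frac_lap s k \<psi> \<epsilon> x)"
  by (simp add: frac_lap_SR_def trunc_frac_lap_def)

lemma trunc_frac_lap_eq_integral_cutoff:
  fixes k :: "'n::finite" shows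
  "trunc_frac_lap s k \<psi> \<epsilon> x = (\<integral>w. (\<psi> x - \<psi> (eta k x w)) * cutoff_powr (real CARD('n) + 2 * s) \<epsilon> w \<partial>lborel)"
  unfolding trunc_frac_lap_def set_lebesgue_integral_def
  by (intro Bochner_Integration.integral_cong) (simp_all add: cutoff_powr_def indicator_def powr_minus divide_inverse del: minus_add_distrib)

lemma borel_measurable_trunc_frac_lap:
  fixes \<psi> :: "real^'n::finite \<Rightarrow> real"
  assumes [measurable]: "\<psi> \<in> borel_measurable borel"
  shows "(\<lambda>x. trunc_frac_lap s k \<psi> \<epsilon> x) \<in> borel_measurable lborel"
proof -
  have "(\<lambda>(x, w). indicator {w. \<epsilon> < norm w} (w::real^'n) *\<^sub>R
      ((\<psi> (x::real^'n) - \<psi> (eta k x w)) / norm w powr (real CARD('n) + 2 * s))) \<in> borel_measurable (lborel \<Otimes>\<^sub>M lborel)"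
    unfolding split_beta' by measurable
  then show ?thesis
    unfolding trunc_frac_lap_def[abs_def] set_lebesgue_integral_def
    by (rule lborel.borel_measurable_lebesgue_integral)
qed

lemma integrable_cutoff_powr_diff:
  fixes x :: "real^'n::finite"
  assumes "a > real CARD('n)" "\<epsilon> > 0"
  shows "integrable lborel (\<lambda>y. cutoff_powr a \<epsilon> (x - y))"
    and "integrable lborel (\<lambda>y. cutoff_powr a \<epsilon> (x - reflect k y))"
proof -
  have "a > real DIM(real^'n)" using assms by simp
  show *: "integrable lborel (\<lambda>y. cutoff_powr a \<epsilon> (x - y))"
    using integrable_cutoff_powr[OF \<open>a > real DIM(real^'n)\<close> assms(2)]
    by (subst lborel_integrable_invariant_iff[OF _ lborel_distr_minus]) simp_all
  show "integrable lborel (\<lambda>y. cutoff_powr a \<epsilon> (x - reflect k y))"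
    using * by (subst lborel_integrable_invariant_iff[OF _ lborel_distr_reflect, where g="\<lambda>y. cutoff_powr a \<epsilon> (x - y)"]) simp_all
qed

lemma trunc_frac_lap_eq_halfspace_integral:
  fixes \<psi> :: "real^'n::finite \<Rightarrow> real" and k :: 'n
  assumes [measurable]: "\<psi> \<in> borel_measurable borel" and M: "\<And>z. \<bar>\<psi> z\<bar> \<le> M"
    and s: "s > 0" and \<epsilon>: "\<epsilon> > 0" and x: "x $ k > 0"
  shows "trunc_frac_lap s k \<psi> \<epsilon> x = (LINT y:halfspace k|lborel. (\<psi> x - \<psi> y) * half_kernel s k \<epsilon> x y)"
proof -
  define a where "a = real CARD('n) + 2 * s"
  have a: "a > real CARD('n)" using s by (simp add: a_def)
  define g1 where "g1 y = indicator (halfspace k) y * (\<psi> x - \<psi> y) * cutoff_powr a \<epsilon> (x - y)" for y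
  define g2 where "g2 y = indicator (halfspace k) y * (\<psi> x - \<psi> y) * cutoff_powr a \<epsilon> (x - reflect k y)" for y
  have [measurable]: "g1 \<in> borel_measurable borel" "g2 \<in> borel_measurable borel"
    unfolding g1_def[abs_def] g2_def[abs_def] by measurable
  have diff_le: "\<bar>\<psi> x - \<psi> y\<bar> \<le> 2 * \<bar>M\<bar>" for y
    using M[of x] M[of y] by linarith
  have int_g1: "integrable lborel g1"
    by (rule Bochner_Integration.integrable_bound[OF integrable_mult_right[OF integrable_cutoff_powr_diff(1)[OF a \<epsilon>, of x], of "2 * M"]])
       (auto intro!: AE_I2 mult_right_mono simp: g1_def abs_mult indicator_def diff_le cutoff_powr_nonneg)
  have int_g2: "integrable lborel g2"
    by (rule Bochner_Integration.integrable_bound[OF integrable_mult_right[OF integrable_cutoff_powr_diff(2)[OF a \<epsilon>, of x], of "2 * M"]])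
       (auto intro!: AE_I2 mult_right_mono simp: g2_def abs_mult indicator_def diff_le cutoff_powr_nonneg)
  have int_g2_reflect: "integrable lborel (\<lambda>y. g2 (reflect k y))"
    using int_g2 by (simp add: lborel_integrable_invariant_iff[OF _ lborel_distr_reflect])
  have "AE w in lborel. (w::real^'n) \<bullet> axis k 1 \<noteq> - x $ k"
    by (rule AE_lborel_inner_neq) (simp add: axis_in_Basis_iff)
  then have split: "AE w in lborel. (\<psi> x - \<psi> (eta k x w)) * cutoff_powr a \<epsilon> w = g1 (x + w) + g2 (reflect k (x + w))"
  proof (eventually_elim)
    fix w :: "real^'n" assume "w \<bullet> axis k 1 \<noteq> - x $ k"
    then have "x $ k + w $ k \<noteq> 0" by (simp add: inner_axis)
    then show "(\<psi> x - \<psi> (eta k x w)) * cutoff_powr a \<epsilon> w = g1 (x + w) + g2 (reflect k (x + w))"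
      by (cases "x $ k + w $ k > 0")
         (auto simp: g1_def g2_def eta_def halfspace_def indicator_def reflect_nth cutoff_powr_def)
  qed
  have "trunc_frac_lap s k \<psi> \<epsilon> x = (\<integral>w. g1 (x + w) + g2 (reflect k (x + w)) \<partial>lborel)"
    unfolding trunc_frac_lap_eq_integral_cutoff a_def[symmetric] by (rule integral_cong_AE) (use split in simp_all)
  also have "\<dots> = (\<integral>w. g1 (x + w) \<partial>lborel) + (\<integral>w. g2 (reflect k (x + w)) \<partial>lborel)"
    using int_g1 int_g2_reflect
    by (intro Bochner_Integration.integral_add)
       (simp_all add: lborel_integrable_invariant_iff[OF _ lborel_distr_plus, where g=g1]
                      lborel_integrable_invariant_iff[OF _ lborel_distr_plus, where g="\<lambda>y. g2 (reflect k y)"])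
  also have "\<dots> = (\<integral>y. g1 y \<partial>lborel) + (\<integral>y. g2 y \<partial>lborel)"
    by (simp add: lborel_integral_invariant[OF _ lborel_distr_plus, where g=g1]
                  lborel_integral_invariant[OF _ lborel_distr_plus, where g="\<lambda>y. g2 (reflect k y)"]
                  lborel_integral_invariant[OF _ lborel_distr_reflect, where g=g2])
  also have "\<dots> = (\<integral>y. g1 y + g2 y \<partial>lborel)"
    by (rule Bochner_Integration.integral_add[symmetric, OF int_g1 int_g2])
  also have "\<dots> = (LINT y:halfspace k|lborel. (\<psi> x - \<psi> y) * half_kernel s k \<epsilon> x y)"
    unfolding set_lebesgue_integral_def
    by (intro Bochner_Integration.integral_cong) (simp_all add: g1_def g2_def half_kernel_def a_def algebra_simps)
  finally show ?thesis .
qed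

lemma integrable_bump_kernel_product:
  fixes \<phi> \<psi> :: "real^'n::finite \<Rightarrow> real" and K :: "real^'n \<Rightarrow> real^'n \<Rightarrow> real"
  assumes [measurable]: "\<phi> \<in> borel_measurable borel" "\<psi> \<in> borel_measurable borel"
      "(\<lambda>z. K (fst z) (snd z)) \<in> borel_measurable (lborel \<Otimes>\<^sub>M lborel)"
    and M\<^sub>\<phi>: "\<And>z. \<bar>\<phi> z\<bar> \<le> M\<^sub>\<phi>" and M\<^sub>\<psi>: "\<And>z. \<bar>\<psi> z\<bar> \<le> M\<^sub>\<psi>" and R: "\<And>z. \<phi> z \<noteq> 0 \<Longrightarrow> norm z < R"
    and K: "\<And>x y. \<bar>K x y\<bar> \<le> half_kernel s k \<epsilon> x y" and s: "0 < s" and \<epsilon>: "0 < \<epsilon>"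
  shows "integrable (lborel \<Otimes>\<^sub>M lborel) (\<lambda>z. \<phi> (fst z) * (\<psi> (fst z) - \<psi> (snd z)) * K (fst z) (snd z))"
proof (rule Bochner_Integration.integrable_bound)
  have "real DIM(real^'n) < real CARD('n) + 2 * s"
    using s by simp
  from integrable_cutoff_powr[OF this \<epsilon>]
  have "(\<integral>\<^sup>+w. cutoff_powr (real CARD('n) + 2 * s) \<epsilon> (w::real^'n) \<partial>lborel) < \<infinity>"
    by (simp add: integrable_iff_bounded cutoff_powr_nonneg)
  then have "integrable (lborel \<Otimes>\<^sub>M lborel) (\<lambda>z. indicator (ball 0 R) (fst z) * half_kernel s k \<epsilon> (fst z) (snd z))"
    by (intro integrable_pair_indicator_ball_fst[OF _ half_kernel_nonneg, where C="2 * (\<integral>\<^sup>+w. cutoff_powr (real CARD('n) + 2 * s) \<epsilon> (w::real^'n) \<partial>lborel)"])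
       (simp_all add: nn_integral_half_kernel ennreal_mult_less_top)
  then show "integrable (lborel \<Otimes>\<^sub>M lborel) (\<lambda>z. M\<^sub>\<phi> * (2 * M\<^sub>\<psi>) * (indicator (ball 0 R) (fst z) * half_kernel s k \<epsilon> (fst z) (snd z)))"
    by (rule integrable_mult_right)
  show "AE z in lborel \<Otimes>\<^sub>M lborel. norm (\<phi> (fst z) * (\<psi> (fst z) - \<psi> (snd z)) * K (fst z) (snd z))
      \<le> norm (M\<^sub>\<phi> * (2 * M\<^sub>\<psi>) * (indicator (ball 0 R) (fst z) * half_kernel s k \<epsilon> (fst z) (snd z)))"
  proof (intro AE_I2)
    fix z :: "(real^'n) \<times> (real^'n)"
    have "\<bar>\<phi> (fst z)\<bar> \<le> M\<^sub>\<phi> * indicator (ball 0 R) (fst z)"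
      using M\<^sub>\<phi>[of "fst z"] R[of "fst z"] by (auto simp: indicator_def)
    moreover have "\<bar>\<psi> (fst z) - \<psi> (snd z)\<bar> \<le> 2 * M\<^sub>\<psi>"
      using M\<^sub>\<psi>[of "fst z"] M\<^sub>\<psi>[of "snd z"] by linarith
    ultimately have "\<bar>\<phi> (fst z) * (\<psi> (fst z) - \<psi> (snd z)) * K (fst z) (snd z)\<bar>
        \<le> M\<^sub>\<phi> * indicator (ball 0 R) (fst z) * (2 * M\<^sub>\<psi>) * half_kernel s k \<epsilon> (fst z) (snd z)"
      unfolding abs_mult using K[of "fst z" "snd z"] by (intro mult_mono) auto
    then show "norm (\<phi> (fst z) * (\<psi> (fst z) - \<psi> (snd z)) * K (fst z) (snd z))
        \<le> norm (M\<^sub>\<phi> * (2 * M\<^sub>\<psi>) * (indicator (ball 0 R) (fst z) * half_kernel s k \<epsilon> (fst z) (snd z)))"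
      by (simp add: algebra_simps)
  qed
qed measurable

lemma trunc_bilinear_identity:
  fixes \<phi> \<psi> :: "real^'n::finite \<Rightarrow> real" and k :: 'n
  assumes [measurable]: "\<phi> \<in> borel_measurable borel" "\<psi> \<in> borel_measurable borel"
    and M\<^sub>\<phi>: "\<And>z. \<bar>\<phi> z\<bar> \<le> M\<^sub>\<phi>" and M\<^sub>\<psi>: "\<And>z. \<bar>\<psi> z\<bar> \<le> M\<^sub>\<psi>" and R: "\<And>z. \<phi> z \<noteq> 0 \<Longrightarrow> norm z < R"
    and s: "0 < s" and \<epsilon>: "0 < \<epsilon>"
  shows "(LINT x:halfspace k|lborel. \<phi> x * trunc_frac_lap s k \<psi> \<epsilon> x)
     = 1/2 * (LINT x:halfspace k|lborel. LINT y:halfspace k|lborel. (\<phi> x - \<phi> y) * (\<psi> x - \<psi> y) * half_kernel s k \<epsilon> x y)"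
proof -
  let ?H = "halfspace k"
  define K where "K x y = indicator ?H x * indicator ?H y * half_kernel s k \<epsilon> x y" for x y
  have K_measurable: "(\<lambda>z. K (fst z) (snd z)) \<in> borel_measurable (lborel \<Otimes>\<^sub>M lborel)"
    unfolding K_def by measurable
  define \<Phi> where "\<Phi> z = \<phi> (fst z) * (\<psi> (fst z) - \<psi> (snd z)) * K (fst z) (snd z)" for z
  have "\<bar>K x y\<bar> \<le> half_kernel s k \<epsilon> x y" for x y
    by (simp add: K_def half_kernel_nonneg split: split_indicator)
  from integrable_bump_kernel_product[OF assms(1,2) K_measurable M\<^sub>\<phi> M\<^sub>\<psi> R this s \<epsilon>]
  have int_\<Phi>: "integrable (lborel \<Otimes>\<^sub>M lborel) \<Phi>"
    by (simp add: \<Phi>_def[abs_def])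
  have K_commute: "K x y = K y x" for x y
    unfolding K_def by (subst half_kernel_commute) (simp add: mult_ac)
  note symmetrize = lborel.pair_integral_symmetrize[OF K_commute int_\<Phi>[unfolded \<Phi>_def]]
  have K_eq: "(\<lambda>z. (\<phi> (fst z) - \<phi> (snd z)) * (\<psi> (fst z) - \<psi> (snd z)) * K (fst z) (snd z))
      = (\<lambda>z. indicator ?H (fst z) * indicator ?H (snd z)
               * ((\<phi> (fst z) - \<phi> (snd z)) * (\<psi> (fst z) - \<psi> (snd z)) * half_kernel s k \<epsilon> (fst z) (snd z)))"
    by (simp add: K_def fun_eq_iff mult_ac)
  have "(LINT x:?H|lborel. \<phi> x * trunc_frac_lap s k \<psi> \<epsilon> x) = (\<integral>x. \<integral>y. \<Phi> (x, y) \<partial>lborel \<partial>lborel)"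
    unfolding set_lebesgue_integral_def
  proof (intro Bochner_Integration.integral_cong refl)
    fix x :: "real^'n"
    show "indicator ?H x *\<^sub>R (\<phi> x * trunc_frac_lap s k \<psi> \<epsilon> x) = (\<integral>y. \<Phi> (x, y) \<partial>lborel)"
    proof (cases "x \<in> ?H")
      case True
      then have "trunc_frac_lap s k \<psi> \<epsilon> x = (LINT y:?H|lborel. (\<psi> x - \<psi> y) * half_kernel s k \<epsilon> x y)"
        by (intro trunc_frac_lap_eq_halfspace_integral[OF _ M\<^sub>\<psi> s \<epsilon>]) (simp_all add: halfspace_def)
      then show ?thesis
        using True by (simp add: \<Phi>_def K_def set_lebesgue_integral_def mult_ac)
    qed (simp add: \<Phi>_def K_def)
  qed
  also have "\<dots> = (\<integral>z. \<Phi> z \<partial>(lborel \<Otimes>\<^sub>M lborel))"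
    by (rule lborel_pair.integral_fst'[OF int_\<Phi>])
  also have "\<dots> = 1/2 * (\<integral>z. (\<phi> (fst z) - \<phi> (snd z)) * (\<psi> (fst z) - \<psi> (snd z)) * K (fst z) (snd z) \<partial>(lborel \<Otimes>\<^sub>M lborel))"
    using symmetrize(2) by (simp add: \<Phi>_def)
  also have "(\<integral>z. (\<phi> (fst z) - \<phi> (snd z)) * (\<psi> (fst z) - \<psi> (snd z)) * K (fst z) (snd z) \<partial>(lborel \<Otimes>\<^sub>M lborel))
      = (LINT x:?H|lborel. LINT y:?H|lborel. (\<phi> x - \<phi> y) * (\<psi> x - \<psi> y) * half_kernel s k \<epsilon> x y)"
    using symmetrize(1) unfolding K_eq by (rule iterated_set_integral_eq_pair_integral[symmetric])
  finally show ?thesis .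
qed

section \<open>Bump functions\<close>

lemma has_derivative_eq_zero_on_open_zero_set:
  fixes f :: "'a::real_normed_vector \<Rightarrow> 'b::real_normed_vector"
  assumes "(f has_derivative F) (at x)" "open U" "x \<in> U" "\<And>y. y \<in> U \<Longrightarrow> f y = 0"
  shows "F = (\<lambda>h. 0)"
proof -
  have "((\<lambda>_. 0) has_derivative (\<lambda>h. 0)) (at x)" by simp
  then have "(f has_derivative (\<lambda>h. 0)) (at x)"
    by (rule has_derivative_transform_within_open[of _ _ _ _ U]) (use assms in auto)
  then show ?thesis using assms(1) by (rule has_derivative_unique[symmetric])
qed

lemma continuous_vanishing_outside_ball_bounded:
  fixes g :: "'a::euclidean_space \<Rightarrow> 'b::real_normed_vector"
  assumes "continuous_on UNIV g" "\<And>x. norm x > R \<Longrightarrow> g x = 0"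
  obtains C where "C \<ge> 0" "\<And>x. norm (g x) \<le> C"
proof -
  have "compact (g ` cball 0 R)"
    by (rule compact_continuous_image) (use assms(1) continuous_on_subset in auto)
  then obtain C where C: "\<And>y. y \<in> g ` cball 0 R \<Longrightarrow> norm y \<le> C"
    by (meson bounded_iff compact_imp_bounded)
  have "norm (g x) \<le> max C 0" for x
    using C[of "g x"] assms(2)[of x] by (cases "norm x \<le> R") auto
  then show ?thesis using that[of "max C 0"] by simp
qed

lemma second_difference_bound:
  fixes f :: "'a::real_normed_vector \<Rightarrow> real" and Df :: "'a \<Rightarrow> 'a \<Rightarrow>\<^sub>L real"
  assumes Df: "\<And>x. (f has_derivative blinfun_apply (Df x)) (at x)"
    and lip: "\<And>x y. norm (Df x - Df y) \<le> B * norm (x - y)" and B: "B \<ge> 0"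
  shows "\<bar>2 * f x - f (x + w) - f (x - w)\<bar> \<le> 2 * B * (norm w)\<^sup>2"
proof -
  define g where "g v = f (x + v) + f (x - v)" for v
  have "(g has_derivative (\<lambda>h. Df (x + v) h - Df (x - v) h)) (at v within cball 0 (norm w))" for v
  proof -
    have "((\<lambda>v. f (x + v)) has_derivative (\<lambda>h. Df (x + v) h)) (at v)"
      using has_derivative_compose[OF has_derivative_add[OF has_derivative_const has_derivative_ident] Df] by simp
    moreover have "((\<lambda>v. f (x - v)) has_derivative (\<lambda>h. Df (x - v) (- h))) (at v)"
      using has_derivative_compose[OF has_derivative_diff[OF has_derivative_const has_derivative_ident] Df] by simp
    ultimately have "(g has_derivative (\<lambda>h. Df (x + v) h + Df (x - v) (- h))) (at v)"
      unfolding g_def by (rule has_derivative_add)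
    then show ?thesis
      by (auto simp: blinfun.minus_right intro: has_derivative_at_withinI)
  qed
  moreover have "onorm (\<lambda>h. Df (x + v) h - Df (x - v) h) \<le> 2 * B * norm w" if "v \<in> cball 0 (norm w)" for v
  proof -
    have "onorm (\<lambda>h. Df (x + v) h - Df (x - v) h) = norm (Df (x + v) - Df (x - v))"
      by (simp add: norm_blinfun.rep_eq blinfun.diff_left[abs_def] fun_diff_def)
    also have "\<dots> \<le> B * norm (2 *\<^sub>R v)"
      using lip[of "x + v" "x - v"] by (simp add: scaleR_2)
    also have "\<dots> \<le> 2 * B * norm w" using that B by (auto intro: mult_left_mono)
    finally show ?thesis .
  qed
  ultimately have "norm (g w - g 0) \<le> (2 * B * norm w) * norm (w - 0)"
    by (intro differentiable_bound[OF convex_cball]) auto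
  then show ?thesis by (simp add: g_def power2_eq_square algebra_simps abs_minus_commute)
qed

locale lipschitz_bump =
  fixes f :: "real^'n::finite \<Rightarrow> real" and M L R :: real
  assumes bounded: "\<And>z. \<bar>f z\<bar> \<le> M"
    and lipschitz: "\<And>u v. \<bar>f u - f v\<bar> \<le> L * norm (u - v)"
    and L_nonneg: "0 \<le> L"
    and support: "\<And>z. f z \<noteq> 0 \<Longrightarrow> norm z < R"
begin

lemma M_nonneg: "0 \<le> M"
  using bounded[of 0] by linarith

lemma diff_bounded: "\<bar>f u - f v\<bar> \<le> 2 * M"
  using bounded[of u] bounded[of v] by linarith

lemma borel_measurable[measurable]: "f \<in> borel_measurable borel"
proof -
  have "L-lipschitz_on UNIV f"
    using L_nonneg lipschitz by (intro lipschitz_onI) (auto simp: dist_real_def dist_norm)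
  then show ?thesis
    by (intro borel_measurable_continuous_onI lipschitz_on_continuous_on)
qed

end

locale smooth_bump = lipschitz_bump f M L R for f :: "real^'n::finite \<Rightarrow> real" and M L R +
  fixes B :: real
  assumes second_difference: "\<And>z w. \<bar>2 * f z - f (z + w) - f (z - w)\<bar> \<le> B * (norm w)\<^sup>2"
    and B_nonneg: "0 \<le> B"

lemma C2_bounded_support_smooth_bump:
  fixes f :: "real^'n::finite \<Rightarrow> real"
  assumes "C2 f" "bounded {x. f x \<noteq> 0}"
  obtains M L B R0 where "\<And>R. R0 < R \<Longrightarrow> smooth_bump f M L R B"
proof -
  obtain Df :: "real^'n \<Rightarrow> ((real^'n) \<Rightarrow>\<^sub>L real)" and D2f
    where Df: "\<And>x. (f has_derivative blinfun_apply (Df x)) (at x)"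
      and D2f: "\<And>x. (Df has_derivative blinfun_apply (D2f x)) (at x)"
      and cont_D2f: "continuous_on UNIV D2f"
    using assms(1) unfolding C2_def by blast
  obtain R0 where R0: "\<And>x. f x \<noteq> 0 \<Longrightarrow> norm x \<le> R0"
    using assms(2) unfolding bounded_iff by auto
  have outside: "open {y::real^'n. R0 < norm y}"
    by (intro open_Collect_less continuous_intros)
  have vanish: "f y = 0" if "y \<in> {y. R0 < norm y}" for y
    using R0[of y] that by force
  have Df_zero: "Df x = 0" if "R0 < norm x" for x
    using has_derivative_eq_zero_on_open_zero_set[OF Df outside(1)] that vanish
    by (simp add: blinfun_eqI)
  have D2f_zero: "D2f x = 0" if "R0 < norm x" for x
    using has_derivative_eq_zero_on_open_zero_set[OF D2f outside(1)] that Df_zero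
    by (simp add: blinfun_eqI)
  have cont_f: "continuous_on UNIV f" and cont_Df: "continuous_on UNIV Df"
    using Df D2f by (meson continuous_at_imp_continuous_on has_derivative_continuous)+
  obtain M where M: "\<And>x. norm (f x) \<le> M"
    by (rule continuous_vanishing_outside_ball_bounded[OF cont_f, of R0]) (use vanish in auto)
  obtain L where L: "L \<ge> 0" "\<And>x. norm (Df x) \<le> L"
    by (rule continuous_vanishing_outside_ball_bounded[OF cont_Df, of R0]) (use Df_zero in auto)
  obtain B0 where B0: "B0 \<ge> 0" "\<And>x. norm (D2f x) \<le> B0"
    by (rule continuous_vanishing_outside_ball_bounded[OF cont_D2f, of R0]) (use D2f_zero in auto)
  have "norm (f x - f y) \<le> L * norm (x - y)" for x y
    by (rule differentiable_bound[where S=UNIV and f'="\<lambda>x. blinfun_apply (Df x)"])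
       (use Df L in \<open>auto simp: norm_blinfun.rep_eq[symmetric] intro: has_derivative_at_withinI\<close>)
  moreover have "norm (Df x - Df y) \<le> B0 * norm (x - y)" for x y
    by (rule differentiable_bound[where S=UNIV and f'="\<lambda>x. blinfun_apply (D2f x)"])
       (use D2f B0 in \<open>auto simp: norm_blinfun.rep_eq[symmetric] intro: has_derivative_at_withinI\<close>)
  then have "\<bar>2 * f x - f (x + w) - f (x - w)\<bar> \<le> (2 * B0) * (norm w)\<^sup>2" for x w
    by (rule second_difference_bound[OF Df _ B0(1)])
  ultimately have "smooth_bump f M L R (2 * B0)" if "R0 < R" for R
  proof unfold_locales
    show "norm z < R" if "f z \<noteq> 0" for z
      using R0[OF that] \<open>R0 < R\<close> by linarith
  qed (use M L B0 in auto)
  then show ?thesis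
    by (rule that)
qed

section \<open>The principal value\<close>

text \<open>
  At a point \<open>x\<close> of the half space, \<open>\<eta> x w = x + w\<close> for \<open>norm w < x $ k\<close>; there \<open>w\<close> and
  \<open>-w\<close> are paired, so that the second difference of \<open>f\<close> controls the integrand (\<open>sym_part\<close>).
  On \<open>norm w \<ge> x $ k\<close> the Lipschitz bound is used, and \<open>norm w \<ge> x $ k\<close> produces the factor
  \<open>(x $ k) powr -s\<close> (\<open>far_part\<close>).
\<close>

locale smooth_bump_at = smooth_bump f M L R B for f :: "real^'n::finite \<Rightarrow> real" and M L R B +
  fixes s :: real and k :: 'n and x :: "real^'n"
  assumes s_pos: "0 < s" and s_less_1: "s < 1" and x_pos: "0 < x $ k"
begin

definition sym_part :: "real \<Rightarrow> real^'n \<Rightarrow> real" where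
  "sym_part \<epsilon> w = (if \<epsilon> < norm w \<and> norm w < x $ k
     then (f x - (f (x + w) + f (x - w)) / 2) * norm w powr (- (real CARD('n) + 2 * s)) else 0)"

definition far_part :: "real^'n \<Rightarrow> real" where
  "far_part w = (if x $ k \<le> norm w then (f x - f (eta k x w)) * norm w powr (- (real CARD('n) + 2 * s)) else 0)"

lemma sym_part_measurable[measurable]: "sym_part \<epsilon> \<in> borel_measurable borel"
  unfolding sym_part_def[abs_def] by measurable

lemma far_part_measurable[measurable]: "far_part \<in> borel_measurable borel"
  unfolding far_part_def[abs_def] by measurable

lemma sym_part_bound:
  assumes "x $ k \<le> \<rho>"
  shows "\<bar>sym_part \<epsilon> w\<bar> \<le> B / 2 * (indicator (ball 0 \<rho>) w * norm w powr (2 - (real CARD('n) + 2 * s)))"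
proof (cases "\<epsilon> < norm w \<and> norm w < x $ k")
  case True
  have "\<bar>f x - (f (x + w) + f (x - w)) / 2\<bar> = \<bar>2 * f x - f (x + w) - f (x - w)\<bar> / 2"
    by (simp add: field_simps)
  also have "\<dots> \<le> B / 2 * (norm w)\<^sup>2"
    using second_difference[of x w] by simp
  finally have second: "\<bar>f x - (f (x + w) + f (x - w)) / 2\<bar> \<le> B / 2 * (norm w)\<^sup>2" .
  have "\<bar>sym_part \<epsilon> w\<bar> = \<bar>f x - (f (x + w) + f (x - w)) / 2\<bar> * norm w powr (- (real CARD('n) + 2 * s))"
    using True by (simp add: sym_part_def abs_mult)
  also have "\<dots> \<le> B / 2 * (norm w)\<^sup>2 * norm w powr (- (real CARD('n) + 2 * s))"
    using second by (rule mult_right_mono) simp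
  also have "\<dots> = B / 2 * norm w powr (2 - (real CARD('n) + 2 * s))"
    by (simp only: mult.assoc norm_sq_mult_powr)
  finally show ?thesis
    using True assms by (simp add: indicator_def)
next
  case False
  then have "sym_part \<epsilon> w = 0"
    unfolding sym_part_def by (simp only: if_False)
  then show ?thesis
    using B_nonneg by simp
qed

lemma integrable_ball_powr_two_minus:
  "integrable lborel (\<lambda>w::real^'n. indicator (ball 0 \<rho>) w * norm w powr (2 - (real CARD('n) + 2 * s)))"
  using s_less_1 by (intro integrable_ball_norm_powr) simp

lemma integrable_sym_part: "integrable lborel (sym_part \<epsilon>)"
proof (rule Bochner_Integration.integrable_bound)
  show "integrable lborel (\<lambda>w::real^'n. B / 2 * (indicator (ball 0 (x $ k)) w * norm w powr (2 - (real CARD('n) + 2 * s))))"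
    by (rule integrable_mult_right) (rule integrable_ball_powr_two_minus)
  show "AE w in lborel. norm (sym_part \<epsilon> w) \<le> norm (B / 2 * (indicator (ball 0 (x $ k)) w * norm w powr (2 - (real CARD('n) + 2 * s))))"
    using sym_part_bound[OF order_refl] B_nonneg by (intro AE_I2) (simp add: abs_mult)
qed simp

lemma far_part_bound:
  "\<bar>far_part w\<bar> \<le> (L * (x $ k) powr (- s) + 2 * M) * powr_weight (1 - s - real CARD('n)) (- (real CARD('n) + 2 * s)) w"
proof (cases "x $ k \<le> norm w")
  case True
  have w: "norm w > 0" using True x_pos by linarith
  have "\<bar>f x - f (eta k x w)\<bar> \<le> L * norm (x - eta k x w)"
    by (rule lipschitz)
  also have "\<dots> \<le> L * norm w"
    using norm_eta_diff_le[OF x_pos, of w] L_nonneg by (intro mult_left_mono) (simp_all add: norm_minus_commute)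
  finally have lip: "\<bar>f x - f (eta k x w)\<bar> \<le> L * norm w" .
  have far: "\<bar>far_part w\<bar> = \<bar>f x - f (eta k x w)\<bar> * norm w powr (- (real CARD('n) + 2 * s))"
    using True by (simp add: far_part_def abs_mult)
  have coeff: "L * (x $ k) powr (- s) \<le> L * (x $ k) powr (- s) + 2 * M" "2 * M \<le> L * (x $ k) powr (- s) + 2 * M"
    using L_nonneg M_nonneg by auto
  show ?thesis
  proof (cases "norm w < 1")
    case small: True
    have "\<bar>far_part w\<bar> \<le> L * norm w * norm w powr (- (real CARD('n) + 2 * s))"
      unfolding far using lip by (rule mult_right_mono) simp
    also have "\<dots> = L * (norm w powr (- s) * norm w powr (1 - s - real CARD('n)))"
      using w by (simp add: powr_add[symmetric] powr_mult_base) (simp add: algebra_simps)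
    also have "\<dots> \<le> L * ((x $ k) powr (- s) * norm w powr (1 - s - real CARD('n)))"
      using True x_pos s_pos L_nonneg by (intro mult_left_mono mult_right_mono powr_mono2') auto
    also have "\<dots> \<le> (L * (x $ k) powr (- s) + 2 * M) * norm w powr (1 - s - real CARD('n))"
      unfolding mult.assoc[symmetric] using coeff(1) by (rule mult_right_mono) simp
    finally show ?thesis using small by (simp add: powr_weight_def)
  next
    case False
    have "\<bar>far_part w\<bar> \<le> 2 * M * norm w powr (- (real CARD('n) + 2 * s))"
      unfolding far using diff_bounded by (rule mult_right_mono) simp
    also have "\<dots> \<le> (L * (x $ k) powr (- s) + 2 * M) * norm w powr (- (real CARD('n) + 2 * s))"
      using coeff(2) by (rule mult_right_mono) simp
    finally show ?thesis using False by (simp add: powr_weight_def)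
  qed
next
  case False
  then show ?thesis
    using L_nonneg M_nonneg by (simp add: far_part_def powr_weight_nonneg)
qed

lemma integrable_far_weight:
  "integrable lborel (powr_weight (1 - s - real CARD('n)) (- (real CARD('n) + 2 * s)) :: real^'n \<Rightarrow> real)"
  using s_pos s_less_1 by (intro integrable_powr_weight) auto

lemma integrable_far_part: "integrable lborel far_part"
proof (rule Bochner_Integration.integrable_bound)
  show "integrable lborel (\<lambda>w. (L * (x $ k) powr (- s) + 2 * M) * powr_weight (1 - s - real CARD('n)) (- (real CARD('n) + 2 * s)) (w::real^'n))"
    by (rule integrable_mult_right) (rule integrable_far_weight)
  show "AE w in lborel. norm (far_part w) \<le> norm ((L * (x $ k) powr (- s) + 2 * M) * powr_weight (1 - s - real CARD('n)) (- (real CARD('n) + 2 * s)) w)"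
    using far_part_bound L_nonneg M_nonneg by (intro AE_I2) (simp add: abs_mult powr_weight_nonneg)
qed simp

lemma trunc_frac_lap_split:
  assumes \<epsilon>: "0 < \<epsilon>" "\<epsilon> < x $ k"
  shows "trunc_frac_lap s k f \<epsilon> x = (\<integral>w. sym_part \<epsilon> w \<partial>lborel) + (\<integral>w. far_part w \<partial>lborel)"
proof -
  define near where "near w = (if \<epsilon> < norm w \<and> norm w < x $ k
    then (f x - f (x + w)) * norm w powr (- (real CARD('n) + 2 * s)) else 0)" for w :: "real^'n"
  have [measurable]: "near \<in> borel_measurable borel"
    unfolding near_def[abs_def] by measurable
  have int_near: "integrable lborel near"
  proof (rule Bochner_Integration.integrable_bound)
    show "integrable lborel (\<lambda>w. 2 * M * cutoff_powr (real CARD('n) + 2 * s) \<epsilon> (w::real^'n))"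
      using s_pos \<epsilon> by (intro integrable_mult_right integrable_cutoff_powr) auto
    show "AE w in lborel. norm (near w) \<le> norm (2 * M * cutoff_powr (real CARD('n) + 2 * s) \<epsilon> w)"
    proof (intro AE_I2)
      fix w :: "real^'n"
      have "\<bar>near w\<bar> \<le> \<bar>f x - f (x + w)\<bar> * cutoff_powr (real CARD('n) + 2 * s) \<epsilon> w"
        by (simp add: near_def cutoff_powr_def abs_mult)
      also have "\<dots> \<le> 2 * M * cutoff_powr (real CARD('n) + 2 * s) \<epsilon> w"
        using diff_bounded by (rule mult_right_mono) (simp add: cutoff_powr_nonneg)
      finally show "norm (near w) \<le> norm (2 * M * cutoff_powr (real CARD('n) + 2 * s) \<epsilon> w)"
        by simp
    qed
  qed simp
  have "trunc_frac_lap s k f \<epsilon> x = (\<integral>w. near w + far_part w \<partial>lborel)"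
    unfolding trunc_frac_lap_eq_integral_cutoff
    by (intro Bochner_Integration.integral_cong)
       (use \<epsilon> in \<open>auto simp: near_def far_part_def cutoff_powr_def eta_eq_add\<close>)
  also have "\<dots> = (\<integral>w. near w \<partial>lborel) + (\<integral>w. far_part w \<partial>lborel)"
    by (rule Bochner_Integration.integral_add[OF int_near integrable_far_part])
  also have "(\<integral>w. near w \<partial>lborel) = (\<integral>w. sym_part \<epsilon> w \<partial>lborel)"
  proof -
    have int_near_minus: "integrable lborel (\<lambda>w. near (- w))"
      using int_near by (simp add: lborel_integrable_invariant_iff[OF _ lborel_distr_uminus_euclidean])
    have "(\<integral>w. sym_part \<epsilon> w \<partial>lborel) = (\<integral>w. (near w + near (- w)) / 2 \<partial>lborel)"
      by (intro Bochner_Integration.integral_cong) (auto simp: sym_part_def near_def field_simps)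
    also have "\<dots> = ((\<integral>w. near w \<partial>lborel) + (\<integral>w. near (- w) \<partial>lborel)) / 2"
      using int_near int_near_minus by simp
    also have "(\<integral>w. near (- w) \<partial>lborel) = (\<integral>w. near w \<partial>lborel)"
      by (simp add: lborel_integral_invariant[OF _ lborel_distr_uminus_euclidean])
    finally show ?thesis by simp
  qed
  finally show ?thesis .
qed

lemma sym_part_integral_tendsto:
  "((\<lambda>\<epsilon>. \<integral>w. sym_part \<epsilon> w \<partial>lborel) \<longlongrightarrow> (\<integral>w. sym_part 0 w \<partial>lborel)) (at_right 0)"
proof (rule integral_dominated_convergence_at_right)
  show "integrable lborel (\<lambda>w::real^'n. B / 2 * (indicator (ball 0 (x $ k)) w * norm w powr (2 - (real CARD('n) + 2 * s))))"
    by (rule integrable_mult_right) (rule integrable_ball_powr_two_minus)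
  show "\<bar>sym_part \<epsilon> w\<bar> \<le> B / 2 * (indicator (ball 0 (x $ k)) w * norm w powr (2 - (real CARD('n) + 2 * s)))" for \<epsilon> w
    by (rule sym_part_bound) simp
  show "((\<lambda>\<epsilon>. sym_part \<epsilon> w) \<longlongrightarrow> sym_part 0 w) (at_right 0)" for w
  proof (rule tendsto_eventually)
    have "\<forall>\<^sub>F \<epsilon> in at_right 0. 0 < \<epsilon> \<and> (w \<noteq> 0 \<longrightarrow> \<epsilon> < norm w)"
    proof (cases "w = 0")
      case False
      then show ?thesis
        using eventually_at_right_real[of 0 "norm w"] by (simp add: eventually_mono)
    qed (simp add: eventually_at_right_less)
    then show "\<forall>\<^sub>F \<epsilon> in at_right 0. sym_part \<epsilon> w = sym_part 0 w"
      by eventually_elim (auto simp: sym_part_def)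
  qed
qed simp

lemma trunc_frac_lap_tendsto:
  "((\<lambda>\<epsilon>. trunc_frac_lap s k f \<epsilon> x) \<longlongrightarrow> (\<integral>w. sym_part 0 w \<partial>lborel) + (\<integral>w. far_part w \<partial>lborel)) (at_right 0)"
proof (rule Lim_transform_eventually)
  show "\<forall>\<^sub>F \<epsilon> in at_right 0. (\<integral>w. sym_part \<epsilon> w \<partial>lborel) + (\<integral>w. far_part w \<partial>lborel) = trunc_frac_lap s k f \<epsilon> x"
    using eventually_at_right_real[OF x_pos] by eventually_elim (simp add: trunc_frac_lap_split)
qed (intro tendsto_add sym_part_integral_tendsto tendsto_const)

lemma abs_integral_le_far_weight:
  assumes [measurable]: "g \<in> borel_measurable borel" and g: "\<And>w. \<bar>g w\<bar> \<le> \<bar>far_part w\<bar>"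
  shows "\<bar>\<integral>w. g w \<partial>lborel\<bar> \<le> (L * (x $ k) powr (- s) + 2 * M)
      * (\<integral>w. powr_weight (1 - s - real CARD('n)) (- (real CARD('n) + 2 * s)) (w::real^'n) \<partial>lborel)"
proof -
  let ?bound = "\<lambda>w::real^'n. (L * (x $ k) powr (- s) + 2 * M) * powr_weight (1 - s - real CARD('n)) (- (real CARD('n) + 2 * s)) w"
  have int_bound: "integrable lborel ?bound"
    by (rule integrable_mult_right) (rule integrable_far_weight)
  have le: "\<bar>g w\<bar> \<le> ?bound w" for w
    using g[of w] far_part_bound[of w] by linarith
  have "integrable lborel g"
    by (rule Bochner_Integration.integrable_bound[OF int_bound])
       (use le L_nonneg M_nonneg in \<open>auto simp: powr_weight_nonneg\<close>)
  then have "\<bar>\<integral>w. g w \<partial>lborel\<bar> \<le> (\<integral>w. ?bound w \<partial>lborel)"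
    using int_bound le by (rule integral_abs_bound_integral)
  then show ?thesis by simp
qed

lemma trunc_frac_lap_bound:
  assumes \<epsilon>: "0 < \<epsilon>" and \<rho>: "x $ k \<le> \<rho>"
  shows "\<bar>trunc_frac_lap s k f \<epsilon> x\<bar>
    \<le> B / 2 * (\<integral>w. indicator (ball 0 \<rho>) w * norm (w::real^'n) powr (2 - (real CARD('n) + 2 * s)) \<partial>lborel)
      + (L * (x $ k) powr (- s) + 2 * M)
        * (\<integral>w. powr_weight (1 - s - real CARD('n)) (- (real CARD('n) + 2 * s)) (w::real^'n) \<partial>lborel)"
    (is "_ \<le> B / 2 * ?I + ?c * ?W")
proof (cases "\<epsilon> < x $ k")
  case True
  have "\<bar>\<integral>w. sym_part \<epsilon> w \<partial>lborel\<bar> \<le> (\<integral>w. B / 2 * (indicator (ball 0 \<rho>) w * norm (w::real^'n) powr (2 - (real CARD('n) + 2 * s))) \<partial>lborel)"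
    using sym_part_bound[OF \<rho>]
    by (intro integral_abs_bound_integral integrable_sym_part integrable_mult_right[OF integrable_ball_powr_two_minus])
  then have "\<bar>\<integral>w. sym_part \<epsilon> w \<partial>lborel\<bar> \<le> B / 2 * ?I" by simp
  moreover have "\<bar>\<integral>w. far_part w \<partial>lborel\<bar> \<le> ?c * ?W"
    by (rule abs_integral_le_far_weight) simp_all
  ultimately show ?thesis
    unfolding trunc_frac_lap_split[OF \<epsilon> True] by linarith
next
  case False
  have "?I \<ge> 0" by (intro integral_nonneg_AE) simp
  have "trunc_frac_lap s k f \<epsilon> x = (\<integral>w. (if \<epsilon> < norm w then far_part w else 0) \<partial>lborel)"
    unfolding trunc_frac_lap_eq_integral_cutoff
    by (intro Bochner_Integration.integral_cong) (use False in \<open>auto simp: far_part_def cutoff_powr_def\<close>)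
  also have "\<bar>\<dots>\<bar> \<le> ?c * ?W"
  proof (rule abs_integral_le_far_weight)
    have "open {w::real^'n. \<epsilon> < norm w}"
      by (intro open_Collect_less continuous_intros)
    then show "(\<lambda>w. if \<epsilon> < norm w then far_part w else 0) \<in> borel_measurable borel"
      by measurable
  qed simp
  finally show ?thesis
    using \<open>?I \<ge> 0\<close> B_nonneg by (simp add: add_increasing)
qed

end

context smooth_bump
begin

lemma trunc_frac_lap_tendsto_Lim:
  assumes "0 < s" "s < 1" "x \<in> halfspace k"
  shows "((\<lambda>\<epsilon>. trunc_frac_lap s k f \<epsilon> x) \<longlongrightarrow> Lim (at_right 0) (\<lambda>\<epsilon>. trunc_frac_lap s k f \<epsilon> x)) (at_right 0)"
proof -
  interpret smooth_bump_at f M L R B s k x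
    using assms by unfold_locales (auto simp: halfspace_def)
  have "Lim (at_right 0) (\<lambda>\<epsilon>. trunc_frac_lap s k f \<epsilon> x)
      = (\<integral>w. sym_part 0 w \<partial>lborel) + (\<integral>w. far_part w \<partial>lborel)"
    by (rule tendsto_Lim[OF _ trunc_frac_lap_tendsto]) simp
  then show ?thesis
    using trunc_frac_lap_tendsto by simp
qed

lemma trunc_frac_lap_uniform_bound:
  assumes "0 < s" "s < 1"
  obtains C1 C2 where "0 \<le> C1" "0 \<le> C2"
    "\<And>\<epsilon> x. 0 < \<epsilon> \<Longrightarrow> x \<in> halfspace k \<Longrightarrow> norm x < R \<Longrightarrow>
       \<bar>trunc_frac_lap s k f \<epsilon> x\<bar> \<le> C1 + C2 * (x $ k) powr (- s)"
proof
  define I where "I = (\<integral>w. indicator (ball 0 R) w * norm (w::real^'n) powr (2 - (real CARD('n) + 2 * s)) \<partial>lborel)"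
  define W where "W = (\<integral>w. powr_weight (1 - s - real CARD('n)) (- (real CARD('n) + 2 * s)) (w::real^'n) \<partial>lborel)"
  have I: "I \<ge> 0" and W: "W \<ge> 0"
    unfolding I_def W_def by (auto intro!: integral_nonneg_AE simp: powr_weight_nonneg)
  show "0 \<le> B / 2 * I + 2 * M * W" "0 \<le> L * W"
    using I W B_nonneg M_nonneg L_nonneg by simp_all
  fix \<epsilon> :: real and x :: "real^'n" assume \<epsilon>: "0 < \<epsilon>" and x: "x \<in> halfspace k" "norm x < R"
  interpret smooth_bump_at f M L R B s k x
    using assms x by unfold_locales (auto simp: halfspace_def)
  have "x $ k \<le> R"
    using component_le_norm_cart[of x k] x by linarith
  with \<epsilon> have "\<bar>trunc_frac_lap s k f \<epsilon> x\<bar> \<le> B / 2 * I + (L * (x $ k) powr (- s) + 2 * M) * W"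
    unfolding I_def W_def by (rule trunc_frac_lap_bound)
  then show "\<bar>trunc_frac_lap s k f \<epsilon> x\<bar> \<le> B / 2 * I + 2 * M * W + L * W * (x $ k) powr (- s)"
    by (simp add: I_def W_def algebra_simps)
qed

end

section \<open>Passage to the limit\<close>

locale bump_pair =
  phi: lipschitz_bump \<phi> M\<^sub>\<phi> L\<^sub>\<phi> R + psi: smooth_bump \<psi> M\<^sub>\<psi> L\<^sub>\<psi> R B
  for \<phi> \<psi> :: "real^'n::finite \<Rightarrow> real" and M\<^sub>\<phi> L\<^sub>\<phi> M\<^sub>\<psi> L\<^sub>\<psi> R B :: real +
  fixes s :: real and k :: 'n
  assumes s_pos: "0 < s" and s_less_1: "s < 1"
begin

definition dirichlet_integrand :: "real \<Rightarrow> (real^'n) \<times> (real^'n) \<Rightarrow> real" where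
  "dirichlet_integrand \<epsilon> z = indicator (halfspace k) (fst z) * indicator (halfspace k) (snd z)
     * ((\<phi> (fst z) - \<phi> (snd z)) * (\<psi> (fst z) - \<psi> (snd z)) * half_kernel s k \<epsilon> (fst z) (snd z))"

definition dirichlet_majorant :: "(real^'n) \<times> (real^'n) \<Rightarrow> real" where
  "dirichlet_majorant z = 2 * (L\<^sub>\<phi> * L\<^sub>\<psi> + 4 * M\<^sub>\<phi> * M\<^sub>\<psi>)
     * powr_weight (2 - (real CARD('n) + 2 * s)) (- (real CARD('n) + 2 * s)) (fst z - snd z)
     * (indicator (ball 0 R) (fst z) + indicator (ball 0 R) (snd z))"

lemma dirichlet_integrand_measurable[measurable]:
  "dirichlet_integrand \<epsilon> \<in> borel_measurable (lborel \<Otimes>\<^sub>M lborel)"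
  unfolding dirichlet_integrand_def[abs_def] by measurable

lemma dirichlet_majorant_nonneg: "dirichlet_majorant z \<ge> 0"
  using phi.L_nonneg psi.L_nonneg phi.M_nonneg psi.M_nonneg
  by (simp add: dirichlet_majorant_def powr_weight_nonneg)

lemma diff_product_bound:
  "\<bar>(\<phi> x - \<phi> y) * (\<psi> x - \<psi> y)\<bar> * norm (x - y) powr (- a)
     \<le> (L\<^sub>\<phi> * L\<^sub>\<psi> + 4 * M\<^sub>\<phi> * M\<^sub>\<psi>) * powr_weight (2 - a) (- a) (x - y)"
proof (cases "norm (x - y) < 1")
  case True
  have "\<bar>(\<phi> x - \<phi> y) * (\<psi> x - \<psi> y)\<bar> \<le> (L\<^sub>\<phi> * norm (x - y)) * (L\<^sub>\<psi> * norm (x - y))"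
    unfolding abs_mult using phi.lipschitz[of x y] psi.lipschitz[of x y] by (intro mult_mono) auto
  then have "\<bar>(\<phi> x - \<phi> y) * (\<psi> x - \<psi> y)\<bar> * norm (x - y) powr (- a)
      \<le> (L\<^sub>\<phi> * norm (x - y)) * (L\<^sub>\<psi> * norm (x - y)) * norm (x - y) powr (- a)"
    by (rule mult_right_mono) simp
  also have "\<dots> = L\<^sub>\<phi> * L\<^sub>\<psi> * ((norm (x - y))\<^sup>2 * norm (x - y) powr (- a))"
    by (simp add: power2_eq_square mult_ac)
  also have "\<dots> \<le> (L\<^sub>\<phi> * L\<^sub>\<psi> + 4 * M\<^sub>\<phi> * M\<^sub>\<psi>) * norm (x - y) powr (2 - a)"
    unfolding norm_sq_mult_powr using phi.M_nonneg psi.M_nonneg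
    by (intro mult_right_mono) auto
  finally show ?thesis
    using True by (simp add: powr_weight_def)
next
  case False
  have "\<bar>(\<phi> x - \<phi> y) * (\<psi> x - \<psi> y)\<bar> \<le> (2 * M\<^sub>\<phi>) * (2 * M\<^sub>\<psi>)"
    unfolding abs_mult using phi.diff_bounded psi.diff_bounded phi.M_nonneg by (intro mult_mono) auto
  then have "\<bar>(\<phi> x - \<phi> y) * (\<psi> x - \<psi> y)\<bar> * norm (x - y) powr (- a)
      \<le> 4 * M\<^sub>\<phi> * M\<^sub>\<psi> * norm (x - y) powr (- a)"
    by (intro mult_right_mono) auto
  also have "\<dots> \<le> (L\<^sub>\<phi> * L\<^sub>\<psi> + 4 * M\<^sub>\<phi> * M\<^sub>\<psi>) * norm (x - y) powr (- a)"
    using phi.L_nonneg psi.L_nonneg by (intro mult_right_mono) auto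
  finally show ?thesis
    using False by (simp add: powr_weight_def)
qed

lemma dirichlet_integrand_bound:
  assumes "0 \<le> \<epsilon>"
  shows "\<bar>dirichlet_integrand \<epsilon> z\<bar> \<le> dirichlet_majorant z"
proof (cases "fst z \<in> halfspace k \<and> snd z \<in> halfspace k \<and> fst z \<noteq> snd z
    \<and> (fst z \<in> ball 0 R \<or> snd z \<in> ball 0 R)")
  case True
  define x y where "x = fst z" and "y = snd z"
  define a where "a = real CARD('n) + 2 * s"
  define p where "p = \<bar>(\<phi> x - \<phi> y) * (\<psi> x - \<psi> y)\<bar>"
  define C where "C = 2 * (L\<^sub>\<phi> * L\<^sub>\<psi> + 4 * M\<^sub>\<phi> * M\<^sub>\<psi>) * powr_weight (2 - a) (- a) (x - y)"
  have "\<bar>dirichlet_integrand \<epsilon> z\<bar> = p * half_kernel s k \<epsilon> x y"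
    using True by (simp add: dirichlet_integrand_def x_def y_def p_def abs_mult half_kernel_nonneg)
  also have "\<dots> \<le> p * (2 * norm (x - y) powr (- a))"
    unfolding a_def p_def using True assms s_pos
    by (intro mult_left_mono half_kernel_le) (auto simp: x_def y_def halfspace_def)
  also have "\<dots> \<le> C * 1"
  proof -
    have "2 * (p * norm (x - y) powr (- a))
        \<le> 2 * ((L\<^sub>\<phi> * L\<^sub>\<psi> + 4 * M\<^sub>\<phi> * M\<^sub>\<psi>) * powr_weight (2 - a) (- a) (x - y))"
      using diff_product_bound[of x y a] unfolding p_def by (rule mult_left_mono) simp
    moreover have "p * (2 * norm (x - y) powr (- a)) = 2 * (p * norm (x - y) powr (- a))"
      by (simp only: mult.left_commute)
    moreover have "C * 1 = 2 * ((L\<^sub>\<phi> * L\<^sub>\<psi> + 4 * M\<^sub>\<phi> * M\<^sub>\<psi>) * powr_weight (2 - a) (- a) (x - y))"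
      by (simp only: C_def mult_1_right mult.assoc)
    ultimately show ?thesis by (simp only:)
  qed
  also have "\<dots> \<le> dirichlet_majorant z"
    unfolding dirichlet_majorant_def x_def[symmetric] y_def[symmetric] a_def[symmetric] C_def
  proof (rule mult_left_mono)
    show "(1::real) \<le> indicator (ball 0 R) x + indicator (ball 0 R) y"
      using True by (auto simp: x_def y_def indicator_def)
    show "0 \<le> 2 * (L\<^sub>\<phi> * L\<^sub>\<psi> + 4 * M\<^sub>\<phi> * M\<^sub>\<psi>) * powr_weight (2 - a) (- a) (x - y)"
      using phi.L_nonneg psi.L_nonneg phi.M_nonneg psi.M_nonneg by (simp add: powr_weight_nonneg)
  qed
  finally show ?thesis .
next
  case False
  have "dirichlet_integrand \<epsilon> z = 0"
  proof (cases "fst z \<in> ball 0 R \<or> snd z \<in> ball 0 R")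
    case True
    then show ?thesis using False by (auto simp: dirichlet_integrand_def)
  next
    case False
    then have "\<phi> (fst z) = 0" "\<phi> (snd z) = 0"
      using phi.support[of "fst z"] phi.support[of "snd z"] by auto
    then show ?thesis by (simp add: dirichlet_integrand_def)
  qed
  then show ?thesis by (simp add: dirichlet_majorant_nonneg)
qed

lemma integrable_dirichlet_majorant: "integrable (lborel \<Otimes>\<^sub>M lborel) dirichlet_majorant"
proof -
  let ?W = "powr_weight (2 - (real CARD('n) + 2 * s)) (- (real CARD('n) + 2 * s)) :: real^'n \<Rightarrow> real"
  have "integrable lborel ?W"
    using s_pos s_less_1 by (intro integrable_powr_weight) auto
  then have fin: "(\<integral>\<^sup>+w. ?W w \<partial>lborel) < \<infinity>"
    by (simp add: integrable_iff_bounded powr_weight_nonneg)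
  have fibre: "(\<integral>\<^sup>+y. ?W (x - y) \<partial>lborel) = (\<integral>\<^sup>+w. ?W w \<partial>lborel)" for x
    by (rule lborel_nn_integral_invariant[OF _ lborel_distr_minus]; measurable)
  have fst: "integrable (lborel \<Otimes>\<^sub>M lborel) (\<lambda>z. indicator (ball 0 R) (fst z) * ?W (fst z - snd z))"
  proof (rule integrable_pair_indicator_ball_fst[where C="\<integral>\<^sup>+w. ?W w \<partial>lborel"])
    show "(\<integral>\<^sup>+y. ?W (x - y) \<partial>lborel) \<le> (\<integral>\<^sup>+w. ?W w \<partial>lborel)" for x
      by (simp only: fibre order_refl)
  qed (simp_all only: fin powr_weight_nonneg, measurable)
  have "integrable (lborel \<Otimes>\<^sub>M lborel) (\<lambda>(x, y). indicator (ball 0 R) (fst (y, x)) * ?W (fst (y, x) - snd (y, x)))"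
    by (rule lborel_pair.integrable_product_swap[OF fst])
  also have "(\<lambda>(x, y). indicator (ball 0 R) (fst (y, x)) * ?W (fst (y, x) - snd (y, x)))
      = (\<lambda>z. indicator (ball 0 R) (snd z) * ?W (fst z - snd z))"
  proof (rule ext, clarify)
    fix x y :: "real^'n"
    have "?W (y - x) = ?W (x - y)"
      by (metis minus_diff_eq powr_weight_minus)
    then show "indicator (ball 0 R) (fst (y, x)) * ?W (fst (y, x) - snd (y, x))
        = indicator (ball 0 R) (snd (x, y)) * ?W (fst (x, y) - snd (x, y))"
      by simp
  qed
  finally have snd: "integrable (lborel \<Otimes>\<^sub>M lborel) (\<lambda>z. indicator (ball 0 R) (snd z) * ?W (fst z - snd z))" .
  have "dirichlet_majorant = (\<lambda>z. 2 * (L\<^sub>\<phi> * L\<^sub>\<psi> + 4 * M\<^sub>\<phi> * M\<^sub>\<psi>)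
      * (indicator (ball 0 R) (fst z) * ?W (fst z - snd z) + indicator (ball 0 R) (snd z) * ?W (fst z - snd z)))"
    unfolding dirichlet_majorant_def by (intro ext) (simp add: ring_distribs mult_ac)
  then show ?thesis
    using fst snd by simp
qed

lemma integrable_dirichlet_integrand:
  assumes "0 \<le> \<epsilon>" shows "integrable (lborel \<Otimes>\<^sub>M lborel) (dirichlet_integrand \<epsilon>)"
  by (rule Bochner_Integration.integrable_bound[OF integrable_dirichlet_majorant])
     (use dirichlet_integrand_bound[OF assms] dirichlet_majorant_nonneg in \<open>auto intro!: AE_I2\<close>)

lemma dirichlet_integral_tendsto:
  "((\<lambda>\<epsilon>. \<integral>z. dirichlet_integrand \<epsilon> z \<partial>(lborel \<Otimes>\<^sub>M lborel))
     \<longlongrightarrow> (\<integral>z. dirichlet_integrand 0 z \<partial>(lborel \<Otimes>\<^sub>M lborel))) (at_right 0)"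
proof (rule integral_dominated_convergence_at_right[OF _ integrable_dirichlet_majorant])
  show "((\<lambda>\<epsilon>. dirichlet_integrand \<epsilon> z) \<longlongrightarrow> dirichlet_integrand 0 z) (at_right 0)" for z
    unfolding dirichlet_integrand_def half_kernel_def
    by (intro tendsto_intros cutoff_powr_tendsto)
  show "\<bar>dirichlet_integrand \<epsilon> z\<bar> \<le> dirichlet_majorant z" if "0 < \<epsilon>" for \<epsilon> z
    using that by (intro dirichlet_integrand_bound) simp
qed simp

lemma set_integral_trunc_frac_lap_tendsto:
  "((\<lambda>\<epsilon>. LINT x:halfspace k|lborel. \<phi> x * trunc_frac_lap s k \<psi> \<epsilon> x)
     \<longlongrightarrow> (LINT x:halfspace k|lborel. \<phi> x * Lim (at_right 0) (\<lambda>\<epsilon>. trunc_frac_lap s k \<psi> \<epsilon> x))) (at_right 0)"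
proof -
  let ?B = "ball 0 R \<inter> halfspace k"
  obtain C1 C2 where C: "0 \<le> C1" "0 \<le> C2"
    and bound: "\<And>\<epsilon> x. 0 < \<epsilon> \<Longrightarrow> x \<in> halfspace k \<Longrightarrow> norm x < R \<Longrightarrow>
      \<bar>trunc_frac_lap s k \<psi> \<epsilon> x\<bar> \<le> C1 + C2 * (x $ k) powr (- s)"
    using psi.trunc_frac_lap_uniform_bound[OF s_pos s_less_1, where k=k] by blast
  define w where "w x = M\<^sub>\<phi> * (C1 * indicator ?B x + C2 * (indicator ?B x * (x $ k) powr (- s)))" for x :: "real^'n"
  have "emeasure lborel ?B \<le> emeasure lborel (ball (0::real^'n) R)"
    by (rule emeasure_mono) auto
  then have "integrable lborel (indicator ?B :: real^'n \<Rightarrow> real)"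
    using emeasure_lborel_ball_finite[of "0::real^'n" R] by (intro integrable_real_indicator) auto
  then have int_w: "integrable lborel w"
    unfolding w_def using integrable_ball_halfspace_coord_powr[OF s_less_1, of R k] by simp
  show ?thesis
    unfolding set_lebesgue_integral_def
  proof (rule integral_dominated_convergence_at_right[OF _ int_w])
    show "(\<lambda>x. indicator (halfspace k) x *\<^sub>R (\<phi> x * trunc_frac_lap s k \<psi> \<epsilon> x)) \<in> borel_measurable lborel" for \<epsilon>
    proof -
      have [measurable]: "(\<lambda>x. trunc_frac_lap s k \<psi> \<epsilon> x) \<in> borel_measurable lborel"
        by (rule borel_measurable_trunc_frac_lap) simp
      show ?thesis by measurable
    qed
    show "((\<lambda>\<epsilon>. indicator (halfspace k) x *\<^sub>R (\<phi> x * trunc_frac_lap s k \<psi> \<epsilon> x))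
        \<longlongrightarrow> indicator (halfspace k) x *\<^sub>R (\<phi> x * Lim (at_right 0) (\<lambda>\<epsilon>. trunc_frac_lap s k \<psi> \<epsilon> x))) (at_right 0)" for x
      using psi.trunc_frac_lap_tendsto_Lim[OF s_pos s_less_1, of x k]
      by (cases "x \<in> halfspace k") (auto intro!: tendsto_intros)
    show "\<bar>indicator (halfspace k) x *\<^sub>R (\<phi> x * trunc_frac_lap s k \<psi> \<epsilon> x)\<bar> \<le> w x" if "0 < \<epsilon>" for \<epsilon> x
    proof (cases "x \<in> halfspace k \<and> \<phi> x \<noteq> 0")
      case True
      then have "norm x < R" by (intro phi.support) simp
      then have "\<bar>\<phi> x * trunc_frac_lap s k \<psi> \<epsilon> x\<bar> \<le> M\<^sub>\<phi> * (C1 + C2 * (x $ k) powr (- s))"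
        unfolding abs_mult using True phi.bounded[of x] phi.M_nonneg bound[OF that]
        by (intro mult_mono) auto
      then show ?thesis
        using True \<open>norm x < R\<close> by (simp add: w_def algebra_simps)
    next
      case False
      have "0 \<le> w x"
        unfolding w_def using C phi.M_nonneg by simp
      then show ?thesis using False by auto
    qed
  qed
qed

lemma dirichlet_form_eq_integral:
  assumes "0 \<le> \<epsilon>"
  shows "(LINT x:halfspace k|lborel. LINT y:halfspace k|lborel. (\<phi> x - \<phi> y) * (\<psi> x - \<psi> y) * half_kernel s k \<epsilon> x y)
    = (\<integral>z. dirichlet_integrand \<epsilon> z \<partial>(lborel \<Otimes>\<^sub>M lborel))"
  using integrable_dirichlet_integrand[OF assms] unfolding dirichlet_integrand_def
  by (rule iterated_set_integral_eq_pair_integral)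

lemma bilinear_identity_half_kernel:
  "(LINT x:halfspace k|lborel. \<phi> x * Lim (at_right 0) (\<lambda>\<epsilon>. trunc_frac_lap s k \<psi> \<epsilon> x))
     = 1/2 * (LINT x:halfspace k|lborel. LINT y:halfspace k|lborel. (\<phi> x - \<phi> y) * (\<psi> x - \<psi> y) * half_kernel s k 0 x y)"
proof -
  have "\<forall>\<^sub>F \<epsilon> in at_right 0. 1/2 * (\<integral>z. dirichlet_integrand \<epsilon> z \<partial>(lborel \<Otimes>\<^sub>M lborel))
      = (LINT x:halfspace k|lborel. \<phi> x * trunc_frac_lap s k \<psi> \<epsilon> x)"
    using eventually_at_right_less[of 0]
  proof eventually_elim
    case (elim \<epsilon>)
    then show ?case
      using trunc_bilinear_identity[OF phi.borel_measurable psi.borel_measurable phi.bounded psi.bounded phi.support s_pos elim]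
      by (simp add: dirichlet_form_eq_integral)
  qed
  then have "((\<lambda>\<epsilon>. LINT x:halfspace k|lborel. \<phi> x * trunc_frac_lap s k \<psi> \<epsilon> x)
      \<longlongrightarrow> 1/2 * (\<integral>z. dirichlet_integrand 0 z \<partial>(lborel \<Otimes>\<^sub>M lborel))) (at_right 0)"
    by (rule Lim_transform_eventually[OF tendsto_mult_left[OF dirichlet_integral_tendsto]])
  with set_integral_trunc_frac_lap_tendsto
  have "(LINT x:halfspace k|lborel. \<phi> x * Lim (at_right 0) (\<lambda>\<epsilon>. trunc_frac_lap s k \<psi> \<epsilon> x))
      = 1/2 * (\<integral>z. dirichlet_integrand 0 z \<partial>(lborel \<Otimes>\<^sub>M lborel))"
    by (rule tendsto_unique[OF trivial_limit_at_right_real])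
  then show ?thesis
    by (simp only: dirichlet_form_eq_integral[OF order_refl])
qed

theorem bilinear_identity:
  "(LINT x:halfspace k|lborel. \<phi> x * frac_lap_SR s k \<psi> x)
     = 1/2 * (LINT x:halfspace k|lborel. LINT y:halfspace k|lborel. (\<phi> x - \<phi> y) * (\<psi> x - \<psi> y) * kernel_half s k x y)"
proof -
  have lhs: "\<phi> x * frac_lap_SR s k \<psi> x = c_ds s k * (\<phi> x * Lim (at_right 0) (\<lambda>\<epsilon>. trunc_frac_lap s k \<psi> \<epsilon> x))" for x
    by (simp add: frac_lap_SR_eq_Lim mult.left_commute)
  have rhs: "(\<phi> x - \<phi> y) * (\<psi> x - \<psi> y) * kernel_half s k x y
      = c_ds s k * ((\<phi> x - \<phi> y) * (\<psi> x - \<psi> y) * half_kernel s k 0 x y)" for x y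
    by (simp add: kernel_half_eq_half_kernel mult.left_commute)
  show ?thesis
    unfolding lhs rhs set_integral_mult_right bilinear_identity_half_kernel by simp
qed

end

theorem proposition5p2:
  fixes s :: real and k :: "'n::finite" and \<phi> \<psi> :: "real^'n \<Rightarrow> real"
  assumes "0 < s" and "s < 1"
    and "C2 \<phi>" and "bounded {x. \<phi> x \<noteq> 0}"
    and "C2 \<psi>" and "bounded {x. \<psi> x \<noteq> 0}"
  shows "(LINT x:halfspace k|lborel. \<phi> x * frac_lap_SR s k \<psi> x)
           = 1/2 * (LINT x:halfspace k|lborel. LINT y:halfspace k|lborel.
                      (\<phi> x - \<phi> y) * (\<psi> x - \<psi> y) * kernel_half s k x y)
         \<and> (LINT x:halfspace k|lborel. \<phi> x * frac_lap_SR s k \<psi> x)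
           = (LINT x:halfspace k|lborel. \<psi> x * frac_lap_SR s k \<phi> x)"
proof -
  obtain M\<^sub>\<phi> L\<^sub>\<phi> B\<^sub>\<phi> R\<^sub>\<phi> where \<phi>: "\<And>R. R\<^sub>\<phi> < R \<Longrightarrow> smooth_bump \<phi> M\<^sub>\<phi> L\<^sub>\<phi> R B\<^sub>\<phi>"
    by (rule C2_bounded_support_smooth_bump[OF assms(3,4)]) (rule that)
  obtain M\<^sub>\<psi> L\<^sub>\<psi> B\<^sub>\<psi> R\<^sub>\<psi> where \<psi>: "\<And>R. R\<^sub>\<psi> < R \<Longrightarrow> smooth_bump \<psi> M\<^sub>\<psi> L\<^sub>\<psi> R B\<^sub>\<psi>"
    by (rule C2_bounded_support_smooth_bump[OF assms(5,6)]) (rule that)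
  define R where "R = max R\<^sub>\<phi> R\<^sub>\<psi> + 1"
  have \<phi>R: "smooth_bump \<phi> M\<^sub>\<phi> L\<^sub>\<phi> R B\<^sub>\<phi>" and \<psi>R: "smooth_bump \<psi> M\<^sub>\<psi> L\<^sub>\<psi> R B\<^sub>\<psi>"
    by (rule \<phi>, simp add: R_def) (rule \<psi>, simp add: R_def)
  interpret \<phi>\<psi>: bump_pair \<phi> \<psi> M\<^sub>\<phi> L\<^sub>\<phi> M\<^sub>\<psi> L\<^sub>\<psi> R B\<^sub>\<psi> s k
    by (intro bump_pair.intro smooth_bump.axioms(1)[OF \<phi>R] \<psi>R bump_pair_axioms.intro assms(1,2))
  interpret \<psi>\<phi>: bump_pair \<psi> \<phi> M\<^sub>\<psi> L\<^sub>\<psi> M\<^sub>\<phi> L\<^sub>\<phi> R B\<^sub>\<phi> s k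
    by (intro bump_pair.intro smooth_bump.axioms(1)[OF \<psi>R] \<phi>R bump_pair_axioms.intro assms(1,2))
  have "(LINT x:halfspace k|lborel. \<psi> x * frac_lap_SR s k \<phi> x)
      = 1/2 * (LINT x:halfspace k|lborel. LINT y:halfspace k|lborel. (\<phi> x - \<phi> y) * (\<psi> x - \<psi> y) * kernel_half s k x y)"
    using \<psi>\<phi>.bilinear_identity by (simp only: mult.commute[of "\<psi> _ - \<psi> _" "\<phi> _ - \<phi> _"])
  with \<phi>\<psi>.bilinear_identity show ?thesis
    by simp
qed

end
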